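(* Let $\chi_1,\chi_2$ be primitive Dirichlet characters with conductors $q_1,q_2>1$ respectively, such that $\chi_1\chi_2(-1)=1$, and let $N=q_1q_2$. There is an algorithm which, given $\gamma=\begin{pmatrix} a&b\\ c&d\end{pmatrix}\in\Gamma_0(N)$ with $c\geq 1$, computes $S_{\chi_1,\chi_2}(\gamma)$, and whose running time as a function of $\gamma$, for fixed $q_1,q_2$ (equivalently, fixed $\chi_1,\chi_2$), is $O(\log(c))$ in the model of computation described in the context.
   Context: $\Gamma_0(N)$ denotes the subgroup of $\mathrm{SL}_2(\mathbb{Z})$ of matrices $\begin{pmatrix} a&b\\ c&d\end{pmatrix}$ with $c\equiv 0 \pmod N$. Let $B_1(x)=0$ if $x\in\mathbb{Z}$ and $B_1(x)=x-\lfloor x\rfloor-\tfrac12$ otherwise. For $\gamma=\begin{pmatrix} a&b\\ c&d\end{pmatrix}\in\Gamma_0(q_1q_2)$ with $c\ge 1$, the generalized Dedekind sum is $$S_{\chi_1,\chi_2}(\gamma)=\sum_{j=1}^{c}\sum_{i=1}^{q_1}\overline{\chi_2(j)\chi_1(i)}\,B_1\!\left(\frac{j}{c}\right)B_1\!\left(\frac{i}{q_1}+\frac{aj}{c}\right).$$ Model of computation: a multiplication of two $2\times 2$ integer matrices counts as one operation; inverting a matrix in $\mathrm{SL}_2(\mathbb{Z})$ takes constant time; values of Dedekind sums lie in a cyclotomic field and are represented as linear combinations of powers of a fixed root of unity, and addition and multiplication of such values take constant time. Any precomputation that depends only on $\chi_1,\chi_2$ (and not on $\gamma$) is not counted as a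 function of $\gamma$. *)

theory Defs
  imports Complex_Main
begin

definition dirichlet_char :: "int \<Rightarrow> (int \<Rightarrow> complex) \<Rightarrow> bool" where
  "dirichlet_char q \<chi> \<longleftrightarrow> q \<ge> 1 \<and>
     (\<forall>n. \<chi> (n + q) = \<chi> n) \<and>
     (\<forall>m n. \<chi> (m * n) = \<chi> m * \<chi> n) \<and>
     \<chi> 1 = 1 \<and>
     (\<forall>n. \<chi> n = 0 \<longleftrightarrow> \<not> coprime n q)"

text \<open>Primitive modulo q (i.e. of conductor q): not induced by a character modulo
  any proper divisor d of q, i.e. for every divisor d of q with d < q there is
  n coprime to q with n = 1 mod d and chi n different from 1.\<close>
definition primitive_char :: "int \<Rightarrow> (int \<Rightarrow> complex) \<Rightarrow> bool" where
  "primitive_char q \<chi> \<longleftrightarrow> dirichlet_char q \<chi> \<and>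
     (\<forall>d. 0 < d \<and> d dvd q \<and> d < q \<longrightarrow>
        (\<exists>n. coprime n q \<and> n mod d = 1 mod d \<and> \<chi> n \<noteq> 1))"

definition B1 :: "real \<Rightarrow> real" where
  "B1 x = (if x \<in> \<int> then 0 else x - of_int \<lfloor>x\<rfloor> - 1/2)"

definition in_Gamma0 :: "int \<Rightarrow> int \<Rightarrow> int \<Rightarrow> int \<Rightarrow> int \<Rightarrow> bool" where
  "in_Gamma0 N a b c d \<longleftrightarrow> a * d - b * c = 1 \<and> N dvd c"

definition dedekind_sum ::
  "(int \<Rightarrow> complex) \<Rightarrow> (int \<Rightarrow> complex) \<Rightarrow> int \<Rightarrow> int \<Rightarrow> int \<Rightarrow> complex" where
  "dedekind_sum \<chi>1 \<chi>2 q1 a c =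
     (\<Sum>j=1..c. \<Sum>i=1..q1. cnj (\<chi>2 j * \<chi>1 i) *
        complex_of_real (B1 (real_of_int j / real_of_int c)) *
        complex_of_real (B1 (real_of_int i / real_of_int q1 + real_of_int a * real_of_int j / real_of_int c)))"

text \<open>A simple imperative language with unit-cost integer arithmetic (on integers of
  polynomially bounded size) and unit-cost ring arithmetic on cyclotomic values,
  represented as complex numbers.  Matrix operations on 2x2 integer matrices are expressible by a
  constant number of integer operations.\<close>

datatype iexp = IConst int | IVar nat | IAdd iexp iexp | ISub iexp iexp | IMul iexp iexp
  | IDiv iexp iexp | IMod iexp iexp

datatype cexp = CConst complex | CVar nat | COfInt iexp | CAdd cexp cexp | CSub cexp cexp
  | CMul cexp cexp

datatype bexp = BLe iexp iexp | BEq iexp iexp | BNot bexp | BAnd bexp bexp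

datatype com = Skip | IAssign nat iexp | CAssign nat cexp | Seq com com
  | If bexp com com | While bexp com

type_synonym state = "(nat \<Rightarrow> int) \<times> (nat \<Rightarrow> complex)"

fun ival :: "(nat \<Rightarrow> int) \<Rightarrow> iexp \<Rightarrow> int" where
  "ival s (IConst k) = k"
| "ival s (IVar x) = s x"
| "ival s (IAdd e1 e2) = ival s e1 + ival s e2"
| "ival s (ISub e1 e2) = ival s e1 - ival s e2"
| "ival s (IMul e1 e2) = ival s e1 * ival s e2"
| "ival s (IDiv e1 e2) = ival s e1 div ival s e2"
| "ival s (IMod e1 e2) = ival s e1 mod ival s e2"

fun ibnd :: "int \<Rightarrow> (nat \<Rightarrow> int) \<Rightarrow> iexp \<Rightarrow> bool" where
  "ibnd B s (IConst k) = (\<bar>k\<bar> \<le> B)"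
| "ibnd B s (IVar x) = True"
| "ibnd B s (IAdd e1 e2) = (ibnd B s e1 \<and> ibnd B s e2 \<and> \<bar>ival s (IAdd e1 e2)\<bar> \<le> B)"
| "ibnd B s (ISub e1 e2) = (ibnd B s e1 \<and> ibnd B s e2 \<and> \<bar>ival s (ISub e1 e2)\<bar> \<le> B)"
| "ibnd B s (IMul e1 e2) = (ibnd B s e1 \<and> ibnd B s e2 \<and> \<bar>ival s (IMul e1 e2)\<bar> \<le> B)"
| "ibnd B s (IDiv e1 e2) = (ibnd B s e1 \<and> ibnd B s e2 \<and> \<bar>ival s (IDiv e1 e2)\<bar> \<le> B)"
| "ibnd B s (IMod e1 e2) = (ibnd B s e1 \<and> ibnd B s e2 \<and> \<bar>ival s (IMod e1 e2)\<bar> \<le> B)"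

fun isize :: "iexp \<Rightarrow> nat" where
  "isize (IConst k) = 0"
| "isize (IVar x) = 0"
| "isize (IAdd e1 e2) = 1 + isize e1 + isize e2"
| "isize (ISub e1 e2) = 1 + isize e1 + isize e2"
| "isize (IMul e1 e2) = 1 + isize e1 + isize e2"
| "isize (IDiv e1 e2) = 1 + isize e1 + isize e2"
| "isize (IMod e1 e2) = 1 + isize e1 + isize e2"

fun cval :: "state \<Rightarrow> cexp \<Rightarrow> complex" where
  "cval s (CConst z) = z"
| "cval s (CVar x) = snd s x"
| "cval s (COfInt e) = of_int (ival (fst s) e)"
| "cval s (CAdd e1 e2) = cval s e1 + cval s e2"
| "cval s (CSub e1 e2) = cval s e1 - cval s e2"
| "cval s (CMul e1 e2) = cval s e1 * cval s e2"

fun cbnd :: "int \<Rightarrow> state \<Rightarrow> cexp \<Rightarrow> bool" where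
  "cbnd B s (CConst z) = True"
| "cbnd B s (CVar x) = True"
| "cbnd B s (COfInt e) = ibnd B (fst s) e"
| "cbnd B s (CAdd e1 e2) = (cbnd B s e1 \<and> cbnd B s e2)"
| "cbnd B s (CSub e1 e2) = (cbnd B s e1 \<and> cbnd B s e2)"
| "cbnd B s (CMul e1 e2) = (cbnd B s e1 \<and> cbnd B s e2)"

fun csize :: "cexp \<Rightarrow> nat" where
  "csize (CConst z) = 0"
| "csize (CVar x) = 0"
| "csize (COfInt e) = 1 + isize e"
| "csize (CAdd e1 e2) = 1 + csize e1 + csize e2"
| "csize (CSub e1 e2) = 1 + csize e1 + csize e2"
| "csize (CMul e1 e2) = 1 + csize e1 + csize e2"

fun bval :: "(nat \<Rightarrow> int) \<Rightarrow> bexp \<Rightarrow> bool" where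
  "bval s (BLe e1 e2) = (ival s e1 \<le> ival s e2)"
| "bval s (BEq e1 e2) = (ival s e1 = ival s e2)"
| "bval s (BNot b) = (\<not> bval s b)"
| "bval s (BAnd b1 b2) = (bval s b1 \<and> bval s b2)"

fun bbnd :: "int \<Rightarrow> (nat \<Rightarrow> int) \<Rightarrow> bexp \<Rightarrow> bool" where
  "bbnd B s (BLe e1 e2) = (ibnd B s e1 \<and> ibnd B s e2)"
| "bbnd B s (BEq e1 e2) = (ibnd B s e1 \<and> ibnd B s e2)"
| "bbnd B s (BNot b) = bbnd B s b"
| "bbnd B s (BAnd b1 b2) = (bbnd B s b1 \<and> bbnd B s b2)"

fun bsize :: "bexp \<Rightarrow> nat" where
  "bsize (BLe e1 e2) = 1 + isize e1 + isize e2"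
| "bsize (BEq e1 e2) = 1 + isize e1 + isize e2"
| "bsize (BNot b) = 1 + bsize b"
| "bsize (BAnd b1 b2) = 1 + bsize b1 + bsize b2"

inductive exec :: "int \<Rightarrow> com \<Rightarrow> state \<Rightarrow> nat \<Rightarrow> state \<Rightarrow> bool" for B :: int where
  ExSkip: "exec B Skip s 0 s"
| ExIAssign: "ibnd B (fst s) e \<Longrightarrow>
    exec B (IAssign x e) s (1 + isize e) ((fst s)(x := ival (fst s) e), snd s)"
| ExCAssign: "cbnd B s e \<Longrightarrow>
    exec B (CAssign x e) s (1 + csize e) (fst s, (snd s)(x := cval s e))"
| ExSeq: "exec B c1 s t1 s1 \<Longrightarrow> exec B c2 s1 t2 s2 \<Longrightarrow> exec B (Seq c1 c2) s (t1 + t2) s2"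
| ExIfT: "bbnd B (fst s) b \<Longrightarrow> bval (fst s) b \<Longrightarrow> exec B c1 s t s' \<Longrightarrow>
    exec B (If b c1 c2) s (1 + bsize b + t) s'"
| ExIfF: "bbnd B (fst s) b \<Longrightarrow> \<not> bval (fst s) b \<Longrightarrow> exec B c2 s t s' \<Longrightarrow>
    exec B (If b c1 c2) s (1 + bsize b + t) s'"
| ExWhileF: "bbnd B (fst s) b \<Longrightarrow> \<not> bval (fst s) b \<Longrightarrow>
    exec B (While b c) s (1 + bsize b) s"
| ExWhileT: "bbnd B (fst s) b \<Longrightarrow> bval (fst s) b \<Longrightarrow> exec B c s t1 s1 \<Longrightarrow>
    exec B (While b c) s1 t2 s2 \<Longrightarrow> exec B (While b c) s (1 + bsize b + t1 + t2) s2"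

text \<open>Complex constants occurring in a program (these encode all precomputation).\<close>
fun cconsts_e :: "cexp \<Rightarrow> complex set" where
  "cconsts_e (CConst z) = {z}"
| "cconsts_e (CVar x) = {}"
| "cconsts_e (COfInt e) = {}"
| "cconsts_e (CAdd e1 e2) = cconsts_e e1 \<union> cconsts_e e2"
| "cconsts_e (CSub e1 e2) = cconsts_e e1 \<union> cconsts_e e2"
| "cconsts_e (CMul e1 e2) = cconsts_e e1 \<union> cconsts_e e2"

fun cconsts :: "com \<Rightarrow> complex set" where
  "cconsts Skip = {}"
| "cconsts (IAssign x e) = {}"
| "cconsts (CAssign x e) = cconsts_e e"
| "cconsts (Seq c1 c2) = cconsts c1 \<union> cconsts c2"
| "cconsts (If b c1 c2) = cconsts c1 \<union> cconsts c2"
| "cconsts (While b c) = cconsts c"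

definition in_cyclotomic :: "nat \<Rightarrow> complex \<Rightarrow> bool" where
  "in_cyclotomic M z \<longleftrightarrow> (\<exists>r :: nat \<Rightarrow> rat.
     z = (\<Sum>k<M. of_rat (r k) * cis (2 * pi * real k / real M)))"

text \<open>Initial state on input matrix (a b; c d): integer registers 0..3 hold a,b,c,d,
  all other registers are 0.  The output is value register 0.\<close>
definition init_state :: "int \<Rightarrow> int \<Rightarrow> int \<Rightarrow> int \<Rightarrow> state" where
  "init_state a b c d =
     ((\<lambda>_. 0)(0 := a, 1 := b, 2 := c, 3 := d), (\<lambda>_. 0))"

end

(* Writing j = d r mod c with a d = 1 (mod c), and r = k (c / q1) + t q2 + rho with
   0 <= k < q1, 0 <= t < e = c / (q1 q2), 0 <= rho < q2, makes both sawtooth factors of the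
   Dedekind sum explicit. The inner sum over i becomes a constant depending only on k, because
   the part linear in r is multiplied by the sum of chi1, which vanishes; and chi2(j) splits as
   chi2(d) chi2(rho). For each of the q1 q2 pairs (k, rho) there remains a sum over t of sawtooth
   values of an arithmetic progression modulo c, that is, a floor sum
   sum_{t < n} floor((a t + b) / m). Floor sums satisfy a reciprocity law exchanging the roles
   of a and m; followed by reduction modulo a this is a step of the Euclidean algorithm, so a
   floor sum is computed in O(log c) steps. The coefficients of the pairs (k, rho) and the values
   of chi2 are precomputed constants in Q(zeta_M), M = phi(q1) phi(q2). *)

theory Submission
  imports Defs "HOL-Number_Theory.Residues"
begin

section \<open>Floor sums\<close>

definition floor_sum :: "int \<Rightarrow> int \<Rightarrow> int \<Rightarrow> int \<Rightarrow> int" where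
  "floor_sum n m a b = (\<Sum>i=0..<n. (a * i + b) div m)"

lemma double_sum_atLeastLessThan_int: "0 \<le> n \<Longrightarrow> 2 * (\<Sum>i=0..<n. i) = n * (n - 1)" for n :: int
proof (induction n rule: int_ge_induct)
  case (step n)
  then have "{0..<n + 1} = insert n {0..<n}" by auto
  with step show ?case by (simp add: algebra_simps)
qed simp

lemma sum_atLeastLessThan_int_shift:
  "0 \<le> n \<Longrightarrow> (\<Sum>j=0..<n + 1. f j) = f 0 + (\<Sum>j=0..<n. f (j + 1))" for n :: int
proof -
  assume "0 \<le> n"
  then have "{0..<n + 1} = insert 0 {1..<n + 1}" by auto
  moreover have "(\<Sum>j=1..<n + 1. f j) = (\<Sum>j=0..<n. f (j + 1))"
    by (rule sum.reindex_bij_witness[where i="\<lambda>j. j + 1" and j="\<lambda>j. j - 1"]) auto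
  ultimately show ?thesis by simp
qed

lemma floor_sum_reduce:
  assumes "m > 0" "n \<ge> 0"
  shows "floor_sum n m a b
    = (a div m) * (n * (n - 1) div 2) + (b div m) * n + floor_sum n m (a mod m) (b mod m)"
proof -
  have term_eq: "(a * i + b) div m = (a div m) * i + b div m + ((a mod m) * i + b mod m) div m" for i
  proof -
    have "((a mod m) * i + b mod m) + ((a div m) * i + b div m) * m
        = (a div m * m + a mod m) * i + (b div m * m + b mod m)"
      by (simp only: algebra_simps)
    then have "a * i + b = ((a mod m) * i + b mod m) + ((a div m) * i + b div m) * m"
      by (simp only: div_mult_mod_eq)
    then show ?thesis using assms(1) by simp
  qed
  have "floor_sum n m a b
      = (a div m) * (\<Sum>i=0..<n. i) + (b div m) * n + floor_sum n m (a mod m) (b mod m)"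
    using assms by (simp add: floor_sum_def term_eq sum.distrib sum_distrib_left)
  also have "(\<Sum>i=0..<n. i) = n * (n - 1) div 2"
    using double_sum_atLeastLessThan_int[OF assms(2)] by simp
  finally show ?thesis .
qed

text \<open>Counting the lattice points under the line \<open>y = (a x + b) / m\<close> by columns or by rows
  gives the reciprocity below; this lemma is one row step of that count.\<close>

lemma floor_sum_add_step:
  assumes "0 < a" "a < m" "0 \<le> y"
  shows "floor_sum ((y + a) div m) a m ((y + a) mod m)
       = floor_sum (y div m) a m (y mod m) + y div m"
proof -
  define q s where "q = y div m" and "s = y mod m"
  have m: "m > 0" using assms(1,2) by simp
  then have s_bounds: "0 \<le> s" "s < m" by (simp_all add: s_def)
  have q: "0 \<le> q" using m assms(3) by (simp add: q_def pos_imp_zdiv_nonneg_iff)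
  have y: "y = q * m + s" by (simp add: q_def s_def)
  have shifted: "(\<Sum>j=0..<q. (m * j + (s + a)) div a) = q + floor_sum q a m s"
    using assms q by (simp add: floor_sum_def sum.distrib algebra_simps)
  show ?thesis
  proof (cases "s + a < m")
    case True
    then have "(y + a) div m = q" "(y + a) mod m = s + a"
      using s_bounds assms by (simp_all add: y add.assoc)
    then show ?thesis using shifted by (simp add: floor_sum_def q_def s_def)
  next
    case False
    have y_a: "y + a = m * (q + 1) + (s + a - m)" by (simp add: y algebra_simps)
    have r: "0 \<le> s + a - m" "s + a - m < m" using False s_bounds assms(2) by linarith+
    have "(y + a) div m = q + 1" "(y + a) mod m = s + a - m"
      using int_div_pos_eq[OF y_a r] int_mod_pos_eq[OF y_a r] by simp_all
    moreover have "(s + a - m) div a = 0" using r s_bounds by (intro div_pos_pos_trivial) auto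
    moreover have "(m * (j + 1) + (s + a - m)) div a = (m * j + (s + a)) div a" for j
      by (simp add: algebra_simps)
    ultimately show ?thesis
      using shifted q by (simp add: floor_sum_def sum_atLeastLessThan_int_shift q_def s_def)
  qed
qed

lemma floor_sum_reciprocity:
  assumes "0 < a" "a < m" "0 \<le> b" "b < m" "0 \<le> n"
  shows "floor_sum n m a b = floor_sum ((a * n + b) div m) a m ((a * n + b) mod m)"
  using assms(5)
proof (induction n rule: int_ge_induct)
  case base
  then show ?case using assms by (simp add: floor_sum_def)
next
  case (step n)
  then have "{0..<n + 1} = insert n {0..<n}" by auto
  then have "floor_sum (n + 1) m a b = floor_sum n m a b + (a * n + b) div m"
    by (simp add: floor_sum_def)
  also have "\<dots> = floor_sum ((a * n + b + a) div m) a m ((a * n + b + a) mod m)"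
    using step assms by (simp add: floor_sum_add_step)
  finally show ?case by (simp add: algebra_simps)
qed

lemma floor_sum_euclid_step:
  assumes "0 < a" "a < m" "0 \<le> b" "b < m" "0 \<le> n"
  defines "n' \<equiv> (a * n + b) div m" and "b' \<equiv> (a * n + b) mod m"
  shows "floor_sum n m a b
    = (m div a) * (n' * (n' - 1) div 2) + (b' div a) * n' + floor_sum n' a (m mod a) (b' mod a)"
proof -
  have "0 \<le> n'" using assms(1-5) by (simp add: n'_def pos_imp_zdiv_nonneg_iff)
  have "floor_sum n m a b = floor_sum n' a m b'"
    unfolding n'_def b'_def using assms(1-5) by (rule floor_sum_reciprocity)
  also have "\<dots> = (m div a) * (n' * (n' - 1) div 2) + (b' div a) * n' + floor_sum n' a (m mod a) (b' mod a)"
    using assms(1) \<open>0 \<le> n'\<close> by (rule floor_sum_reduce)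
  finally show ?thesis .
qed

section \<open>Dirichlet characters\<close>

lemma sum_mult_mod_reindex:
  fixes m u v :: int
  assumes "m > 0" "(u * v) mod m = 1 mod m"
  shows "(\<Sum>i=0..<m. f ((u * i) mod m)) = (\<Sum>i=0..<m. f i)"
proof -
  have cancel: "(x * ((y * z) mod m)) mod m = z mod m" if "(x * y) mod m = 1 mod m" for x y z
  proof -
    have "(x * ((y * z) mod m)) mod m = ((x * y) mod m * z) mod m"
      by (simp add: mod_mult_right_eq mod_mult_left_eq mult.assoc)
    with that show ?thesis by (simp add: mod_mult_left_eq)
  qed
  have vu: "(v * u) mod m = 1 mod m" using assms(2) by (simp add: mult.commute)
  show ?thesis
    by (rule sum.reindex_bij_witness[where i="\<lambda>i. (v * i) mod m" and j="\<lambda>i. (u * i) mod m"])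
       (use assms cancel[OF assms(2)] cancel[OF vu] in auto)
qed

lemma dirichlet_char_add_mult:
  assumes "dirichlet_char q \<chi>"
  shows "\<chi> (x + k * q) = \<chi> x"
proof (induction k rule: int_induct[where k=0])
  case (step1 i)
  have "\<chi> (x + (i + 1) * q) = \<chi> ((x + i * q) + q)" by (simp add: algebra_simps)
  with step1 assms show ?case by (simp add: dirichlet_char_def)
next
  case (step2 i)
  have "\<chi> (x + i * q) = \<chi> ((x + (i - 1) * q) + q)" by (simp add: algebra_simps)
  with step2 assms show ?case by (simp add: dirichlet_char_def)
qed simp

lemma dirichlet_char_mod:
  assumes "dirichlet_char q \<chi>"
  shows "\<chi> (x mod q) = \<chi> x"
  using dirichlet_char_add_mult[OF assms, of "x mod q" "x div q"] by simp

lemma dirichlet_char_cong: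
  assumes "dirichlet_char q \<chi>" "x mod q = y mod q"
  shows "\<chi> x = \<chi> y"
  by (metis assms dirichlet_char_mod)

lemma primitive_char_sum_eq_0:
  assumes "primitive_char q \<chi>" "q > 1"
  shows "(\<Sum>i=1..q. \<chi> i) = 0"
proof -
  have \<chi>: "dirichlet_char q \<chi>" using assms(1) by (simp add: primitive_char_def)
  \<comment> \<open>the divisor \<open>d = 1\<close> in the definition of primitivity: \<open>\<chi>\<close> is not principal\<close>
  have "\<forall>d. 0 < d \<and> d dvd q \<and> d < q \<longrightarrow> (\<exists>n. coprime n q \<and> n mod d = 1 mod d \<and> \<chi> n \<noteq> 1)"
    using assms(1) by (simp add: primitive_char_def)
  from this[rule_format, of 1] assms(2) obtain n where n: "coprime n q" "\<chi> n \<noteq> 1"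
    by auto
  obtain u v where uv: "u * n + v * q = 1"
    using bezout_int[of n q] n(1) by (auto simp: coprime_iff_gcd_eq_1)
  have "(u * n + v * q) mod q = (u * n) mod q" by simp
  with uv have inv: "(n * u) mod q = 1 mod q" by (simp add: mult.commute)
  have "(\<Sum>i=0..<q. \<chi> i) = (\<Sum>i=0..<q. \<chi> ((n * i) mod q))"
    using sum_mult_mod_reindex[OF _ inv, where f=\<chi>] assms(2) by simp
  also have "\<dots> = \<chi> n * (\<Sum>i=0..<q. \<chi> i)"
    using \<chi> by (simp add: dirichlet_char_mod sum_distrib_left dirichlet_char_def)
  finally have "(1 - \<chi> n) * (\<Sum>i=0..<q. \<chi> i) = 0" by (simp add: algebra_simps)
  then have "(\<Sum>i=0..<q. \<chi> i) = 0" using n(2) by simp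
  moreover have "{1..q} = insert q {1..<q}" "{0..<q} = insert 0 {1..<q}" using assms(2) by auto
  moreover have "\<chi> q = \<chi> 0" using dirichlet_char_mod[OF \<chi>, of q] by simp
  ultimately show ?thesis by simp
qed

section \<open>The sawtooth function\<close>

lemma B1_add_of_int: "B1 (x + of_int t) = B1 x"
  by (simp add: B1_def add_in_Ints_iff_right[of "of_int t"])

lemma B1_of_int_div:
  assumes "c > 0" "\<not> c dvd p"
  shows "B1 (of_int p / of_int c) = of_int p / of_int c - of_int (p div c) - 1/2"
  using assms by (simp add: B1_def of_int_div_of_int_in_Ints_iff floor_divide_of_int_eq)

lemma B1_add_fraction:
  assumes "0 \<le> k" "k < q" "0 < s" "s < L" "1 \<le> i" "i \<le> q" "c = q * L"
  shows "B1 (of_int i / of_int q + of_int (k * L + s) / of_int c)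
       = of_int i / of_int q + of_int (k * L + s) / of_int c - 1/2 - (if q - k \<le> i then 1 else 0)"
proof -
  define p where "p = (i + k) * L + s"
  have L: "L > 0" using assms(3,4) by simp
  have q: "q > 0" using assms(1,2) by simp
  have c: "c > 0" using assms(7) L q by simp
  have x: "of_int i / of_int q + of_int (k * L + s) / of_int c = (of_int p / of_int c :: real)"
    using assms(7) L q by (simp add: p_def field_simps)
  have ndvd: "\<not> c dvd p"
  proof
    assume "c dvd p"
    moreover have "L dvd c" using assms(7) by simp
    ultimately have "L dvd (i + k) * L + s" unfolding p_def by (rule dvd_trans[rotated])
    then have "L dvd s" by (simp add: dvd_add_right_iff)
    then show False using assms(3,4) zdvd_not_zless by blast
  qed
  have p_div: "p div c = (if q - k \<le> i then 1 else 0)"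
  proof (cases "q - k \<le> i")
    case True
    have "q * L \<le> (i + k) * L" using True L by (intro mult_right_mono) auto
    moreover have "(i + k + 1) * L \<le> (2 * q) * L" using assms(2,6) L by (intro mult_right_mono) auto
    moreover have "(i + k + 1) * L = (i + k) * L + L" "(2 * q) * L = 2 * (q * L)"
      by (simp_all add: algebra_simps)
    ultimately have "0 \<le> p - c" "p - c < c"
      using assms(3,4,7) unfolding p_def by linarith+
    then show ?thesis using True int_div_pos_eq[of p c 1 "p - c"] by simp
  next
    case False
    have "(i + k + 1) * L \<le> q * L" using False L by (intro mult_right_mono) auto
    moreover have "0 \<le> (i + k) * L" using assms(1,5) L by simp
    moreover have "(i + k + 1) * L = (i + k) * L + L" by (simp add: algebra_simps)
    ultimately have "0 \<le> p" "p < c" using assms(3,4,7) unfolding p_def by linarith+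
    then show ?thesis using False by (simp add: div_pos_pos_trivial)
  qed
  have "B1 (of_int i / of_int q + of_int (k * L + s) / of_int c) = B1 (of_int p / of_int c)"
    using x by (rule arg_cong)
  also have "\<dots> = of_int p / of_int c - of_int (p div c) - 1/2"
    by (rule B1_of_int_div[OF c ndvd])
  also have "\<dots> = of_int i / of_int q + of_int (k * L + s) / of_int c - 1/2
                   - (if q - k \<le> i then 1 else 0)"
    using x by (simp add: p_div)
  finally show ?thesis .
qed

section \<open>Decomposition of the Dedekind sum\<close>

lemma sum_atLeastLessThan_int_mult:
  fixes m n :: int
  assumes "n > 0" "m \<ge> 0"
  shows "(\<Sum>r=0..<m * n. h r) = (\<Sum>u=0..<m. \<Sum>v=0..<n. h (u * n + v))"
  using assms(2)
proof (induction m rule: int_ge_induct)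
  case (step m)
  have "m * n \<le> (m + 1) * n" "0 \<le> m * n" using assms(1) step by simp_all
  then have "{0..<(m + 1) * n} = {0..<m * n} \<union> {m * n..<m * n + n}"
    by (auto simp: algebra_simps)
  moreover have "(\<Sum>r=m * n..<m * n + n. h r) = (\<Sum>v=0..<n. h (m * n + v))"
    by (rule sum.reindex_bij_witness[where i="\<lambda>v. m * n + v" and j="\<lambda>r. r - m * n"]) auto
  moreover have "{0..<m + 1} = insert m {0..<m}" using step by auto
  ultimately show ?case using step by (simp add: sum.union_disjoint add.commute)
qed simp

definition shifted_B1_sum :: "(int \<Rightarrow> complex) \<Rightarrow> int \<Rightarrow> int \<Rightarrow> complex" where
  "shifted_B1_sum w q k =
     (\<Sum>i=1..q. w i * of_real (of_int i / of_int q - 1/2 - (if q - k \<le> i then 1 else 0)))"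

lemma sum_B1_add_fraction:
  assumes "(\<Sum>i=1..q. w i) = 0" "0 \<le> k" "k < q" "0 < s" "s < L" "c = q * L"
  shows "(\<Sum>i=1..q. w i * of_real (B1 (of_int i / of_int q + of_int (k * L + s) / of_int c)))
       = shifted_B1_sum w q k"
proof -
  define x :: real where "x = of_int (k * L + s) / of_int c"
  have "(\<Sum>i=1..q. w i * of_real (B1 (of_int i / of_int q + x)))
      = (\<Sum>i=1..q. w i * of_real (of_int i / of_int q - 1/2 - (if q - k \<le> i then 1 else 0))
                   + of_real x * w i)"
  proof (intro sum.cong refl)
    fix i assume "i \<in> {1..q}"
    then have B1_eq: "B1 (of_int i / of_int q + x)
        = of_int i / of_int q + x - 1/2 - (if q - k \<le> i then 1 else 0)"
      unfolding x_def by (intro B1_add_fraction) (use assms(2-6) in auto)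
    show "w i * of_real (B1 (of_int i / of_int q + x))
        = w i * of_real (of_int i / of_int q - 1/2 - (if q - k \<le> i then 1 else 0)) + of_real x * w i"
      unfolding B1_eq by (simp add: algebra_simps)
  qed
  also have "\<dots> = shifted_B1_sum w q k + of_real x * (\<Sum>i=1..q. w i)"
    by (simp add: shifted_B1_sum_def sum.distrib sum_distrib_left)
  finally show ?thesis using assms(1) by (simp add: x_def)
qed

definition block_value :: "int \<Rightarrow> int \<Rightarrow> int \<Rightarrow> int \<Rightarrow> int \<Rightarrow> int \<Rightarrow> real" where
  "block_value q1 q2 c d k \<rho> =
     of_int d * (of_int (c div (q1 * q2)) * of_int k / of_int q1 + of_int \<rho> / of_int (q1 * q2)
                 + (of_int (c div (q1 * q2)) - 1) / (2 * of_int q1))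
     - of_int (c div (q1 * q2)) / 2
     - of_int (floor_sum (c div (q1 * q2)) c (d * q2) (d * (q2 * (c div (q1 * q2)) * k + \<rho>)))"

lemma sum_sawtooth_eq_block_value:
  assumes "q1 > 0" "q2 > 0" "e > 0" "c = q1 * q2 * e"
  shows "(\<Sum>t=0..<e. of_int ((d * (k * (q2 * e) + (t * q2 + \<rho>))) mod c) / of_int c - 1/2)
       = block_value q1 q2 c d k \<rho>"
proof -
  define x where "x t = d * (k * (q2 * e) + (t * q2 + \<rho>))" for t
  have x_lin: "x t = (d * q2) * t + d * (q2 * e * k + \<rho>)" for t
    by (simp add: x_def algebra_simps)
  have e: "c div (q1 * q2) = e" and c: "c > 0" using assms by simp_all
  have x_mod: "real_of_int (x t mod c) = of_int (x t) - of_int c * of_int (x t div c)" for t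
  proof -
    have "x t mod c = x t - c * (x t div c)"
      by (simp add: minus_div_mult_eq_mod [symmetric] mult.commute)
    then show ?thesis by simp
  qed
  have "2 * (\<Sum>t=0..<e. t) = e * (e - 1)"
    using double_sum_atLeastLessThan_int assms(3) by simp
  then have "real_of_int (2 * (\<Sum>t=0..<e. t)) = of_int (e * (e - 1))" by (rule arg_cong)
  then have gauss: "(\<Sum>t=0..<e. real_of_int t) = of_int e * (of_int e - 1) / 2" by simp
  have "(\<Sum>t=0..<e. real_of_int (x t mod c) / of_int c - 1/2)
      = (\<Sum>t=0..<e. of_int (x t) / of_int c - of_int (x t div c) - 1/2)"
    using c by (intro sum.cong refl) (simp add: x_mod field_simps)
  also have "\<dots> = (\<Sum>t=0..<e. real_of_int (x t)) / of_int c - of_int (\<Sum>t=0..<e. x t div c)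
                   - of_int e / 2"
    using assms(3) by (simp add: sum.distrib sum_subtractf sum_divide_distrib)
  also have "(\<Sum>t=0..<e. x t div c) = floor_sum e c (d * q2) (d * (q2 * e * k + \<rho>))"
    by (simp add: floor_sum_def x_lin)
  also have "(\<Sum>t=0..<e. real_of_int (x t))
      = of_int (d * q2) * (\<Sum>t=0..<e. real_of_int t) + of_int e * of_int (d * (q2 * e * k + \<rho>))"
    using assms(3) by (simp add: x_lin sum.distrib sum_distrib_left)
  also note gauss
  also have "(of_int (d * q2) * (of_int e * (of_int e - 1) / 2)
               + of_int e * of_int (d * (q2 * e * k + \<rho>))) / of_int c
             - of_int (floor_sum e c (d * q2) (d * (q2 * e * k + \<rho>))) - of_int e / 2
           = block_value q1 q2 c d k \<rho>"
    unfolding block_value_def e using assms c by (simp add: field_simps)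
  finally show ?thesis by (simp only: x_def)
qed

definition dedekind_term ::
  "(int \<Rightarrow> complex) \<Rightarrow> (int \<Rightarrow> complex) \<Rightarrow> int \<Rightarrow> int \<Rightarrow> int \<Rightarrow> int \<Rightarrow> complex" where
  "dedekind_term \<chi>1 \<chi>2 q1 a c j =
     cnj (\<chi>2 j) * of_real (B1 (of_int j / of_int c)) *
     (\<Sum>i=1..q1. cnj (\<chi>1 i) * of_real (B1 (of_int i / of_int q1 + of_int a * of_int j / of_int c)))"

lemma dedekind_sum_eq_sum_term:
  "dedekind_sum \<chi>1 \<chi>2 q1 a c = (\<Sum>j=1..c. dedekind_term \<chi>1 \<chi>2 q1 a c j)"
  unfolding dedekind_sum_def dedekind_term_def
  by (intro sum.cong refl) (simp add: sum_distrib_left mult_ac)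

lemma dedekind_term_mult_mod:
  assumes \<chi>2: "dirichlet_char q2 \<chi>2" "q2 > 1"
    and sum0: "(\<Sum>i=1..q1. cnj (\<chi>1 i)) = 0"
    and inv: "(a * d) mod c = 1" and c: "c = q1 * q2 * e"
    and k: "0 \<le> k" "k < q1" and t: "0 \<le> t" "t < e" and \<rho>: "0 \<le> \<rho>" "\<rho> < q2"
  defines "r \<equiv> k * (q2 * e) + (t * q2 + \<rho>)"
  shows "dedekind_term \<chi>1 \<chi>2 q1 a c ((d * r) mod c) = cnj (\<chi>2 d) *
     (shifted_B1_sum (\<lambda>i. cnj (\<chi>1 i)) q1 k * cnj (\<chi>2 \<rho>) *
      of_real (of_int ((d * r) mod c) / of_int c - 1/2))"
proof -
  define j L where "j = (d * r) mod c" and "L = q2 * e"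
  have L: "L > 0" and cL: "c = q1 * L" using c t \<chi>2(2) by (simp_all add: L_def)
  have c_pos: "c > 0" using cL L k by simp
  have s: "0 \<le> t * q2 + \<rho>" "t * q2 + \<rho> < L"
  proof -
    have "(t + 1) * q2 \<le> e * q2" using t \<chi>2(2) by (intro mult_right_mono) auto
    then show "t * q2 + \<rho> < L" using \<rho> by (simp add: L_def algebra_simps)
    show "0 \<le> t * q2 + \<rho>" using t \<rho> \<chi>2(2) by simp
  qed
  have r_L: "r = k * L + (t * q2 + \<rho>)" by (simp add: r_def L_def)
  have r: "0 \<le> r" "r < c"
  proof -
    have "(k + 1) * L \<le> q1 * L" using k L by (intro mult_right_mono) auto
    then show "r < c" using s cL by (simp add: r_L algebra_simps)
    show "0 \<le> r" using k s L by (simp add: r_L)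
  qed
  have \<chi>2_j: "\<chi>2 j = \<chi>2 d * \<chi>2 \<rho>"
  proof -
    have "q2 dvd c" using c by simp
    then have "\<chi>2 j = \<chi>2 (d * r)"
      by (intro dirichlet_char_cong[OF \<chi>2(1)]) (simp add: j_def mod_mod_cancel)
    moreover have "\<chi>2 r = \<chi>2 \<rho>"
      using dirichlet_char_add_mult[OF \<chi>2(1), of \<rho> "k * e + t"] by (simp add: r_def algebra_simps)
    ultimately show ?thesis using \<chi>2(1) by (simp add: dirichlet_char_def)
  qed
  show ?thesis
  proof (cases "\<chi>2 \<rho> = 0")
    case True
    then show ?thesis by (simp add: dedekind_term_def \<chi>2_j flip: j_def)
  next
    case False
    then have "\<rho> \<noteq> 0" using \<chi>2 by (auto simp: dirichlet_char_def)
    moreover have "0 \<le> t * q2" using t \<chi>2(2) by simp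
    ultimately have s_pos: "0 < t * q2 + \<rho>" using \<rho> by linarith
    have aj: "(a * j) mod c = r"
    proof -
      have "(a * j) mod c = ((a * d) mod c * r) mod c"
        by (simp add: j_def mod_mult_right_eq mod_mult_left_eq mult.assoc)
      with inv r show ?thesis by simp
    qed
    have j: "0 < j" "j < c"
    proof -
      have "0 \<le> k * L" using k L by simp
      then have "0 < r" using s_pos by (simp add: r_L)
      then have "j \<noteq> 0" using aj by auto
      then show "0 < j" "j < c" using c_pos by (simp_all add: j_def order_le_neq_trans)
    qed
    have B1_j: "B1 (of_int j / of_int c) = of_int j / of_int c - 1/2"
      using B1_of_int_div[of c j] j by (simp add: zdvd_not_zless div_pos_pos_trivial)
    have "a * j = c * ((a * j) div c) + r" using aj by (metis div_mult_mod_eq mult.commute)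
    then have aj_real: "real_of_int a * of_int j / of_int c = of_int r / of_int c + of_int ((a * j) div c)"
      using c_pos by (simp add: field_simps flip: of_int_mult of_int_add)
    have shift: "real_of_int i / of_int q1 + of_int a * of_int j / of_int c
        = (of_int i / of_int q1 + of_int (k * L + (t * q2 + \<rho>)) / of_int c) + of_int ((a * j) div c)"
      for i by (simp add: aj_real r_L add.assoc)
    have inner: "(\<Sum>i=1..q1. cnj (\<chi>1 i) * of_real (B1 (of_int i / of_int q1 + of_int a * of_int j / of_int c)))
        = shifted_B1_sum (\<lambda>i. cnj (\<chi>1 i)) q1 k"
      unfolding shift B1_add_of_int by (rule sum_B1_add_fraction[OF sum0 k s_pos s(2) cL])
    show ?thesis
      by (simp add: dedekind_term_def B1_j inner \<chi>2_j mult_ac flip: j_def)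
  qed
qed

lemma dedekind_sum_eq_sum_mult_mod:
  assumes "1 < c" "(a * d) mod c = 1"
  shows "dedekind_sum \<chi>1 \<chi>2 q1 a c = (\<Sum>r=0..<c. dedekind_term \<chi>1 \<chi>2 q1 a c ((d * r) mod c))"
proof -
  define T where "T = dedekind_term \<chi>1 \<chi>2 q1 a c"
  have "T 0 = 0" "T c = 0" by (simp_all add: T_def dedekind_term_def B1_def)
  moreover have "{1..c} = insert c {1..<c}" "{0..<c} = insert 0 {1..<c}" using assms(1) by auto
  ultimately have "dedekind_sum \<chi>1 \<chi>2 q1 a c = (\<Sum>j=0..<c. T j)"
    by (simp add: dedekind_sum_eq_sum_term T_def)
  also have "\<dots> = (\<Sum>r=0..<c. T ((d * r) mod c))"
    using sum_mult_mod_reindex[of c d a T] assms by (simp add: mult.commute)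
  finally show ?thesis by (simp add: T_def)
qed

lemma sum_dedekind_term_eq_block_value:
  assumes \<chi>2: "dirichlet_char q2 \<chi>2" "q2 > 1"
    and sum0: "(\<Sum>i=1..q1. cnj (\<chi>1 i)) = 0"
    and inv: "(a * d) mod c = 1" and c: "c = q1 * q2 * e" "0 < e"
    and k: "0 \<le> k" "k < q1" and \<rho>: "0 \<le> \<rho>" "\<rho> < q2"
  shows "(\<Sum>t=0..<e. dedekind_term \<chi>1 \<chi>2 q1 a c ((d * (k * (q2 * e) + (t * q2 + \<rho>))) mod c))
    = cnj (\<chi>2 d) * (shifted_B1_sum (\<lambda>i. cnj (\<chi>1 i)) q1 k * cnj (\<chi>2 \<rho>)
                     * of_real (block_value q1 q2 c d k \<rho>))"
proof -
  define G where "G = shifted_B1_sum (\<lambda>i. cnj (\<chi>1 i)) q1 k * cnj (\<chi>2 \<rho>)"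
  have "(\<Sum>t=0..<e. dedekind_term \<chi>1 \<chi>2 q1 a c ((d * (k * (q2 * e) + (t * q2 + \<rho>))) mod c))
      = (\<Sum>t=0..<e. cnj (\<chi>2 d) * (G * of_real (of_int ((d * (k * (q2 * e) + (t * q2 + \<rho>))) mod c)
                                                / of_int c - 1/2)))"
    using k \<rho> by (intro sum.cong refl) (simp add: G_def dedekind_term_mult_mod[OF \<chi>2 sum0 inv c(1)])
  also have "\<dots> = cnj (\<chi>2 d) * (G * of_real (\<Sum>t=0..<e.
                 of_int ((d * (k * (q2 * e) + (t * q2 + \<rho>))) mod c) / of_int c - 1/2))"
    by (simp only: of_real_sum sum_distrib_left)
  also have "(\<Sum>t=0..<e. of_int ((d * (k * (q2 * e) + (t * q2 + \<rho>))) mod c) / of_int c - 1/2)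
      = block_value q1 q2 c d k \<rho>"
    using k \<chi>2(2) c by (intro sum_sawtooth_eq_block_value) simp_all
  finally show ?thesis by (simp add: G_def mult.assoc)
qed

lemma dedekind_sum_eq_block_sum:
  assumes \<chi>2: "dirichlet_char q2 \<chi>2" "q2 > 1" and "q1 > 0"
    and sum0: "(\<Sum>i=1..q1. cnj (\<chi>1 i)) = 0"
    and \<gamma>: "a * d - b * c = 1" "q1 * q2 dvd c" "c \<ge> 1"
  shows "dedekind_sum \<chi>1 \<chi>2 q1 a c = cnj (\<chi>2 (d mod c)) *
     (\<Sum>k=0..<q1. \<Sum>\<rho>=0..<q2. shifted_B1_sum (\<lambda>i. cnj (\<chi>1 i)) q1 k * cnj (\<chi>2 \<rho>) *
        of_real (block_value q1 q2 c (d mod c) k \<rho>))"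
proof -
  define d' e T where "d' = d mod c" and "e = c div (q1 * q2)"
    and "T = dedekind_term \<chi>1 \<chi>2 q1 a c"
  have c: "c = q1 * q2 * e" using \<gamma>(2) by (simp add: e_def)
  have q: "q1 * q2 > 0" using assms(2,3) by simp
  moreover have "0 < q1 * q2 * e" using c \<gamma>(3) by simp
  ultimately have e_pos: "e > 0" by (rule zero_less_mult_pos[rotated])
  have "0 < q1 * e" using assms(3) e_pos by simp
  then have "q2 * 1 \<le> q2 * (q1 * e)" using \<chi>2(2) by (intro mult_left_mono) auto
  moreover have "c = q2 * (q1 * e)" using c by (simp add: mult_ac)
  ultimately have c_gt_1: "c > 1" using \<chi>2(2) by linarith
  have inv: "(a * d') mod c = 1"
  proof -
    have "(a * d') mod c = (1 + b * c) mod c"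
      using \<gamma>(1) by (simp add: d'_def mod_mult_right_eq algebra_simps)
    with c_gt_1 show ?thesis by simp
  qed
  have outer: "(\<Sum>r=0..<c. f r) = (\<Sum>k=0..<q1. \<Sum>s=0..<q2 * e. f (k * (q2 * e) + s))" for f
    using sum_atLeastLessThan_int_mult[of "q2 * e" q1 f] assms(3) e_pos \<chi>2(2)
    by (simp add: c mult.assoc)
  have inner: "(\<Sum>s=0..<q2 * e. g s) = (\<Sum>t=0..<e. \<Sum>\<rho>=0..<q2. g (t * q2 + \<rho>))" for g
    using sum_atLeastLessThan_int_mult[of q2 e g] e_pos \<chi>2(2) by (simp add: mult.commute)
  have "dedekind_sum \<chi>1 \<chi>2 q1 a c = (\<Sum>r=0..<c. T ((d' * r) mod c))"
    unfolding T_def by (rule dedekind_sum_eq_sum_mult_mod[OF c_gt_1 inv])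
  also have "\<dots> = (\<Sum>k=0..<q1. \<Sum>\<rho>=0..<q2. \<Sum>t=0..<e.
                     T ((d' * (k * (q2 * e) + (t * q2 + \<rho>))) mod c))"
    by (simp only: outer inner sum.swap[of _ "{0..<e}"])
  also have "\<dots> = (\<Sum>k=0..<q1. \<Sum>\<rho>=0..<q2. cnj (\<chi>2 d') *
      (shifted_B1_sum (\<lambda>i. cnj (\<chi>1 i)) q1 k * cnj (\<chi>2 \<rho>) * of_real (block_value q1 q2 c d' k \<rho>)))"
    unfolding T_def using sum_dedekind_term_eq_block_value[OF \<chi>2 sum0 inv c e_pos]
    by (intro sum.cong refl) simp
  finally show ?thesis by (simp add: d'_def sum_distrib_left)
qed

section \<open>Loop-free programs\<close>

fun sl_run :: "com \<Rightarrow> state \<Rightarrow> state" where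
  "sl_run Skip s = s"
| "sl_run (IAssign x e) s = ((fst s)(x := ival (fst s) e), snd s)"
| "sl_run (CAssign x e) s = (fst s, (snd s)(x := cval s e))"
| "sl_run (Seq c1 c2) s = sl_run c2 (sl_run c1 s)"
| "sl_run (If b c1 c2) s = (if bval (fst s) b then sl_run c1 s else sl_run c2 s)"
| "sl_run (While b c) s = s"

fun sl_time :: "com \<Rightarrow> state \<Rightarrow> nat" where
  "sl_time Skip s = 0"
| "sl_time (IAssign x e) s = 1 + isize e"
| "sl_time (CAssign x e) s = 1 + csize e"
| "sl_time (Seq c1 c2) s = sl_time c1 s + sl_time c2 (sl_run c1 s)"
| "sl_time (If b c1 c2) s = 1 + bsize b + (if bval (fst s) b then sl_time c1 s else sl_time c2 s)"
| "sl_time (While b c) s = 0"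

fun sl_bounded :: "int \<Rightarrow> com \<Rightarrow> state \<Rightarrow> bool" where
  "sl_bounded B Skip s = True"
| "sl_bounded B (IAssign x e) s = ibnd B (fst s) e"
| "sl_bounded B (CAssign x e) s = cbnd B s e"
| "sl_bounded B (Seq c1 c2) s = (sl_bounded B c1 s \<and> sl_bounded B c2 (sl_run c1 s))"
| "sl_bounded B (If b c1 c2) s =
     (bbnd B (fst s) b \<and> (if bval (fst s) b then sl_bounded B c1 s else sl_bounded B c2 s))"
| "sl_bounded B (While b c) s = False"

lemma exec_sl_run: "sl_bounded B c s \<Longrightarrow> exec B c s (sl_time c s) (sl_run c s)"
proof (induction c arbitrary: s)
  case (Seq c1 c2)
  then show ?case using ExSeq by fastforce
next
  case (If b c1 c2)
  then show ?case
    using ExIfT[of B s b c1 "sl_time c1 s" "sl_run c1 s" c2]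
      ExIfF[of B s b c2 "sl_time c2 s" "sl_run c2 s" c1]
    by (cases "bval (fst s) b") simp_all
qed (use ExSkip ExIAssign ExCAssign in simp_all)

section \<open>Computing floor sums by a loop\<close>

lemma of_int_half_pred_prod:
  "of_int (n * (n - 1) div 2) = (of_int n * of_int (n - 1) / 2 :: 'a :: field_char_0)"
proof -
  have "n * (n - 1) = 2 * (n * (n - 1) div 2)" by simp
  then have "(of_int (n * (n - 1)) :: 'a) = 2 * of_int (n * (n - 1) div 2)"
    by (metis of_int_mult of_int_numeral)
  then show ?thesis by simp
qed

definition reduce_increment :: "nat \<Rightarrow> nat \<Rightarrow> nat \<Rightarrow> nat \<Rightarrow> cexp" where
  "reduce_increment n m a b =
     CAdd (CMul (CMul (CMul (COfInt (IVar n)) (COfInt (ISub (IVar n) (IConst 1)))) (CConst (1/2)))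
                (COfInt (IDiv (IVar a) (IVar m))))
          (CMul (COfInt (IVar n)) (COfInt (IDiv (IVar b) (IVar m))))"

lemma cval_reduce_increment:
  assumes "fst s n = N" "fst s m = M" "fst s a = A" "fst s b = Bv"
  shows "cval s (reduce_increment n m a b) = of_int ((A div M) * (N * (N - 1) div 2) + (Bv div M) * N)"
  unfolding reduce_increment_def of_int_add of_int_mult of_int_half_pred_prod
  using assms by (simp add: field_simps)

text \<open>The loop keeps the arguments \<open>n, m, a, b\<close> of the floor sum still to be computed in
  integer registers 6, 7, 8, 9 and the part of the result found so far in value register 1;
  registers 10 and 11 are scratch. Each pass performs \<open>floor_sum_euclid_step\<close>.\<close>

definition floor_sum_step :: com where
  "floor_sum_step =
     Seq (IAssign 10 (IAdd (IMul (IVar 8) (IVar 6)) (IVar 9)))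
     (Seq (IAssign 6 (IDiv (IVar 10) (IVar 7)))
     (Seq (IAssign 9 (IMod (IVar 10) (IVar 7)))
     (Seq (CAssign 1 (CAdd (CVar 1) (reduce_increment 6 8 7 9)))
     (Seq (IAssign 9 (IMod (IVar 9) (IVar 8)))
     (Seq (IAssign 11 (IMod (IVar 7) (IVar 8)))
     (Seq (IAssign 7 (IVar 8))
          (IAssign 8 (IVar 11))))))))"

definition floor_sum_loop :: com where
  "floor_sum_loop = While (BLe (IConst 1) (IVar 8)) floor_sum_step"

definition euclid_cost :: "int \<Rightarrow> int \<Rightarrow> real" where
  "euclid_cost m a = (if a = 0 then 0 else 1 + log 2 (of_int m) + log 2 (of_int a))"

lemma euclid_cost_step:
  assumes "0 < a" "a < m"
  shows "1 + euclid_cost a (m mod a) \<le> euclid_cost m a"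
proof (cases "m mod a = 0")
  case True
  then show ?thesis using assms by (simp add: euclid_cost_def)
next
  case False
  have pos: "0 < m mod a" using False assms(1) pos_mod_sign[of a m] by linarith
  have "a * 1 \<le> a * (m div a)"
    using assms zdiv_mono1[of a m a] by (intro mult_left_mono) auto
  moreover have "m = a * (m div a) + m mod a" by simp
  ultimately have "2 * (m mod a) \<le> m" using pos_mod_bound[OF assms(1), of m] by linarith
  then have "real_of_int (2 * (m mod a)) \<le> of_int m" by (simp only: of_int_le_iff)
  then have "log 2 (2 * of_int (m mod a)) \<le> log 2 (of_int m)"
    using pos assms by (subst log_le_cancel_iff) auto
  then show ?thesis using False assms by (simp add: euclid_cost_def log_mult)
qed

lemma euclid_cost_le:
  assumes "0 \<le> a" "a < m"
  shows "euclid_cost m a \<le> 1 + 2 * log 2 (of_int m)"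
  using assms by (simp add: euclid_cost_def)

lemma div_le_of_less_mult: "0 < m \<Longrightarrow> y < m * (k + 1) \<Longrightarrow> y div m \<le> k" for y m k :: int
proof (rule ccontr)
  assume m: "0 < m" and y: "y < m * (k + 1)" and "\<not> y div m \<le> k"
  then have "m * (k + 1) \<le> m * (y div m)" by (intro mult_left_mono) auto
  moreover have "m * (y div m) \<le> y" using pos_mod_sign[OF m, of y] minus_mod_eq_mult_div[of y m] by linarith
  ultimately show False using y by simp
qed

lemma zdiv_le_dividend: "0 \<le> y \<Longrightarrow> 0 < m \<Longrightarrow> y div m \<le> y" for y m :: int
  by (cases "y = 0") (simp_all add: int_div_le_self)

lemma floor_sum_step_exec:
  assumes regs: "fst s 6 = n" "fst s 7 = m" "fst s 8 = a" "fst s 9 = b"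
    and bounds: "0 \<le> n" "n \<le> C" "m \<le> C" "0 < a" "a < m" "0 \<le> b" "b < m" "C * C + C \<le> B"
  defines "n' \<equiv> (a * n + b) div m" and "b' \<equiv> (a * n + b) mod m"
  shows "exec B floor_sum_step s 28 (sl_run floor_sum_step s)"
    and "fst (sl_run floor_sum_step s) 6 = n'" "fst (sl_run floor_sum_step s) 7 = a"
      "fst (sl_run floor_sum_step s) 8 = m mod a" "fst (sl_run floor_sum_step s) 9 = b' mod a"
    and "\<forall>x<6. fst (sl_run floor_sum_step s) x = fst s x"
    and "\<forall>x. x \<noteq> 1 \<longrightarrow> snd (sl_run floor_sum_step s) x = snd s x"
    and "snd (sl_run floor_sum_step s) 1
           = snd s 1 + of_int ((m div a) * (n' * (n' - 1) div 2) + (b' div a) * n')"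
proof -
  have m: "0 < m" using bounds by simp
  have an: "0 \<le> a * n" "a * n \<le> C * C" using bounds by (simp_all add: mult_mono)
  have "a * n + b < m * (n + 1)"
    using bounds mult_right_mono[of a m n] by (simp add: algebra_simps)
  then have n': "0 \<le> n'" "n' \<le> n"
    using an bounds m div_le_of_less_mult[OF m] by (simp_all add: n'_def pos_imp_zdiv_nonneg_iff)
  have b': "0 \<le> b'" "b' < m" using m by (simp_all add: b'_def)
  have quotients: "0 \<le> m div a" "m div a \<le> m" "0 \<le> b' div a" "b' div a \<le> b'"
    using m b' bounds by (simp_all add: pos_imp_zdiv_nonneg_iff zdiv_le_dividend)
  have "0 \<le> C * C" by simp
  then have le_B: "n' \<le> B" "1 - n' \<le> B" "n' - 1 \<le> B" "b' \<le> B" "m div a \<le> B" "b' div a \<le> B"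
      "b' mod a \<le> B" "m mod a \<le> B" "1 \<le> B"
    using bounds n' b' quotients pos_mod_bound[OF bounds(4), of b'] pos_mod_bound[OF bounds(4), of m]
    by linarith+
  have "sl_bounded B floor_sum_step s"
    using regs bounds an n' b' quotients le_B
    by (simp add: floor_sum_step_def reduce_increment_def n'_def [symmetric] b'_def [symmetric]
        abs_le_iff)
  moreover have "sl_time floor_sum_step s = 28"
    by (simp add: floor_sum_step_def reduce_increment_def)
  ultimately show "exec B floor_sum_step s 28 (sl_run floor_sum_step s)"
    using exec_sl_run by metis
  show "fst (sl_run floor_sum_step s) 6 = n'" "fst (sl_run floor_sum_step s) 7 = a"
      "fst (sl_run floor_sum_step s) 8 = m mod a" "fst (sl_run floor_sum_step s) 9 = b' mod a"
      "\<forall>x<6. fst (sl_run floor_sum_step s) x = fst s x"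
      "\<forall>x. x \<noteq> 1 \<longrightarrow> snd (sl_run floor_sum_step s) x = snd s x"
    using regs by (simp_all add: floor_sum_step_def n'_def b'_def)
  show "snd (sl_run floor_sum_step s) 1
      = snd s 1 + of_int ((m div a) * (n' * (n' - 1) div 2) + (b' div a) * n')"
    using regs by (simp add: floor_sum_step_def cval_reduce_increment n'_def b'_def)
qed

lemma floor_sum_loop_exec:
  assumes "fst s 6 = n" "fst s 7 = m" "fst s 8 = a" "fst s 9 = b"
    and "0 \<le> n" "n \<le> C" "0 < m" "m \<le> C" "0 \<le> a" "a < m" "0 \<le> b" "b < m"
    and "C * C + C \<le> B" "1 \<le> B"
  shows "\<exists>t s'. exec B floor_sum_loop s t s' \<and> snd s' 1 = snd s 1 + of_int (floor_sum n m a b)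
     \<and> (\<forall>x<6. fst s' x = fst s x) \<and> (\<forall>x. x \<noteq> 1 \<longrightarrow> snd s' x = snd s x)
     \<and> real t \<le> 2 + 30 * euclid_cost m a"
  using assms
proof (induction "nat a" arbitrary: s n m a b rule: less_induct)
  case less
  show ?case
  proof (cases "a = 0")
    case True
    have "exec B floor_sum_loop s (Suc (Suc 0)) s"
      unfolding floor_sum_loop_def
      using ExWhileF[of B s "BLe (IConst 1) (IVar 8)" floor_sum_step] less True by simp
    moreover have "floor_sum n m a b = 0"
      using True less by (simp add: floor_sum_def div_pos_pos_trivial)
    ultimately show ?thesis
      using True by (intro exI[of _ "Suc (Suc 0)"] exI[of _ s]) (simp add: euclid_cost_def)
  next
    case False
    then have a: "0 < a" using less by simp
    define n' b' where "n' = (a * n + b) div m" and "b' = (a * n + b) mod m"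
    define s1 where "s1 = sl_run floor_sum_step s"
    note step = floor_sum_step_exec[OF less(2-7,9) a less(11-14), folded n'_def b'_def s1_def]
    have n': "0 \<le> n'" "n' \<le> C"
      using less a div_le_of_less_mult[of m "a * n + b" n] mult_right_mono[of a m n]
      by (simp_all add: n'_def pos_imp_zdiv_nonneg_iff algebra_simps)
    have a_C: "a \<le> C" using less by simp
    have mod_a: "0 \<le> m mod a" "m mod a < a" "0 \<le> b' mod a" "b' mod a < a"
      using a by simp_all
    then have "nat (m mod a) < nat a" by simp
    from less(1)[OF this step(2-5) n' a a_C mod_a less(14,15)]
    obtain t' s' where IH: "exec B floor_sum_loop s1 t' s'"
        "snd s' 1 = snd s1 1 + of_int (floor_sum n' a (m mod a) (b' mod a))"
        "\<forall>x<6. fst s' x = fst s1 x" "\<forall>x. x \<noteq> 1 \<longrightarrow> snd s' x = snd s1 x"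
        "real t' \<le> 2 + 30 * euclid_cost a (m mod a)"
      by blast
    have "exec B floor_sum_loop s (30 + t') s'"
      using ExWhileT[OF _ _ step(1) IH(1)[unfolded floor_sum_loop_def]] less a
      by (simp add: floor_sum_loop_def)
    moreover have "floor_sum n m a b
        = (m div a) * (n' * (n' - 1) div 2) + (b' div a) * n' + floor_sum n' a (m mod a) (b' mod a)"
      unfolding n'_def b'_def using a less(11-13,6) by (rule floor_sum_euclid_step)
    moreover have "real (30 + t') \<le> 2 + 30 * euclid_cost m a"
      using IH(5) euclid_cost_step[OF a less(11)] by simp
    ultimately show ?thesis
      using IH(2-4) step less by (intro exI[of _ "30 + t'"] exI[of _ s']) auto
  qed
qed

section \<open>The program\<close>

text \<open>Integer registers 0 to 3 hold the input \<open>a, b, c, d\<close>, register 4 holds \<open>d mod c\<close> and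
  register 5 holds \<open>e = c div (q1 q2)\<close>; the result is accumulated in value register 0.\<close>

definition block_init :: "int \<Rightarrow> int \<Rightarrow> int \<Rightarrow> com" where
  "block_init q2 k \<rho> =
     Seq (IAssign 6 (IVar 5))
     (Seq (IAssign 7 (IVar 2))
     (Seq (IAssign 8 (IMul (IVar 4) (IConst q2)))
     (Seq (IAssign 9 (IMul (IVar 4) (IAdd (IMul (IConst (q2 * k)) (IVar 5)) (IConst \<rho>))))
     (Seq (CAssign 1 (reduce_increment 6 7 8 9))
     (Seq (IAssign 8 (IMod (IVar 8) (IVar 7)))
          (IAssign 9 (IMod (IVar 9) (IVar 7))))))))"

definition block_value_expr :: "int \<Rightarrow> int \<Rightarrow> int \<Rightarrow> int \<Rightarrow> cexp" where
  "block_value_expr q1 q2 k \<rho> =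
     CSub (CSub (CMul (COfInt (IVar 4))
                  (CAdd (CAdd (CMul (COfInt (IVar 5)) (CConst (of_int k / of_int q1)))
                              (CConst (of_int \<rho> / of_int (q1 * q2))))
                        (CMul (COfInt (ISub (IVar 5) (IConst 1))) (CConst (1 / (2 * of_int q1))))))
                (CMul (COfInt (IVar 5)) (CConst (1/2))))
          (CVar 1)"

definition block_prog :: "(int \<Rightarrow> complex) \<Rightarrow> (int \<Rightarrow> complex) \<Rightarrow> int \<Rightarrow> int \<Rightarrow> int \<Rightarrow> int \<Rightarrow> com" where
  "block_prog \<chi>1 \<chi>2 q1 q2 k \<rho> =
     Seq (block_init q2 k \<rho>)
     (Seq floor_sum_loop
          (CAssign 0 (CAdd (CVar 0)
             (CMul (CConst (shifted_B1_sum (\<lambda>i. cnj (\<chi>1 i)) q1 k * cnj (\<chi>2 \<rho>)))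
                   (block_value_expr q1 q2 k \<rho>)))))"

lemma block_init_bounds:
  fixes c d e q1 q2 k \<rho> B :: int
  assumes "0 \<le> d" "d < c" "1 \<le> e" "e \<le> c" "0 < q1" "0 < q2"
    and "0 \<le> k" "k < q1" "0 \<le> \<rho>" "\<rho> < q2" "q1 * q2 * (c + 1)^2 \<le> B"
  defines "P \<equiv> q2 * e * k + \<rho>"
  shows "0 \<le> q2 * k * e" "0 \<le> d * q2" "0 \<le> d * P"
    and "q2 \<le> B" "- q2 \<le> B" "q2 * k \<le> B" "- (q2 * k) \<le> B" "q2 * k * e \<le> B"
      "q2 * k * e + \<rho> \<le> B" "\<rho> \<le> B" "P \<le> B" "d * q2 \<le> B" "d * P \<le> B"
      "(d * q2) div c \<le> B" "(d * P) div c \<le> B" "(d * q2) mod c \<le> B" "(d * P) mod c \<le> B"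
      "1 \<le> B" "e - 1 \<le> B" "1 - e \<le> B"
proof -
  define V where "V = q1 * q2"
  have "0 < V" using assms(5,6) by (simp add: V_def)
  moreover have "q2 \<le> V" using assms(5,6) mult_right_mono[of 1 q1 q2] by (simp add: V_def)
  ultimately have V: "1 \<le> V" "q2 \<le> V" by simp_all
  have c: "1 \<le> c" and c_pos: "0 < c" using assms(3,4) by simp_all
  have qk: "0 \<le> q2 * k" "q2 * k \<le> V"
    using assms(6-8) mult_left_mono[of k q1 q2] by (simp_all add: V_def mult.commute)
  have qke: "0 \<le> q2 * k * e" "q2 * k * e \<le> V * c"
    using qk assms(3,4) by (simp, intro mult_mono) auto
  have Vc: "V * (c + 1) = V * c + V" "1 * c \<le> V * c"
    using V c by (simp_all add: algebra_simps)
  have P: "0 \<le> P" "P \<le> V * (c + 1)"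
    using qke assms(9,10) V Vc by (simp_all add: P_def mult_ac)
  have "d * q2 \<le> c * V" using assms(1,2,6) V by (intro mult_mono) auto
  then have dq: "0 \<le> d * q2" "d * q2 \<le> V * c" using assms(1,6) by (simp_all add: mult.commute)
  have dP: "0 \<le> d * P" "d * P \<le> c * (V * (c + 1))"
    using assms(1,2) P by (simp_all add: mult_mono)
  show "0 \<le> q2 * k * e" "0 \<le> d * q2" "0 \<le> d * P" using qke dq dP by simp_all
  have "(c + 1) * 1 \<le> (c + 1) * (c + 1)" "c * (c + 1) \<le> (c + 1) * (c + 1)"
    using c by (intro mult_left_mono mult_right_mono; simp)+
  then have "V * (c + 1) \<le> V * ((c + 1) * (c + 1))" "V * (c * (c + 1)) \<le> V * ((c + 1) * (c + 1))"
    using V by (simp_all add: mult_left_mono)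
  moreover have "V * ((c + 1) * (c + 1)) \<le> B"
    using assms(11) by (simp add: V_def power2_eq_square)
  ultimately have H: "V * (c + 1) \<le> B" "c * (V * (c + 1)) \<le> B"
    by (simp_all add: mult_ac)
  have "1 \<le> V * (c + 1)" using Vc V c by linarith
  then have "c * 1 \<le> c * (V * (c + 1))" using c by (intro mult_left_mono) simp_all
  then show "(d * q2) div c \<le> B" "(d * P) div c \<le> B" "(d * q2) mod c \<le> B"
      "(d * P) mod c \<le> B" "d * P \<le> B"
    using H dq dP Vc V zdiv_le_dividend[OF dq(1) c_pos] zdiv_le_dividend[OF dP(1) c_pos]
      pos_mod_bound[OF c_pos, of "d * q2"] pos_mod_bound[OF c_pos, of "d * P"]
    by linarith+
  show "q2 \<le> B" "- q2 \<le> B" "q2 * k \<le> B" "- (q2 * k) \<le> B" "q2 * k * e \<le> B"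
      "q2 * k * e + \<rho> \<le> B" "\<rho> \<le> B" "P \<le> B" "d * q2 \<le> B" "1 \<le> B" "e - 1 \<le> B"
      "1 - e \<le> B"
    using V c qk qke Vc P dq H(1) assms(3,4,6,9,10)
    by linarith+
qed

lemma block_init_exec:
  assumes regs: "fst s 2 = c" "fst s 4 = d" "fst s 5 = e"
    and "0 \<le> d" "d < c" "1 \<le> e" "e \<le> c" "0 < q1" "0 < q2"
    and "0 \<le> k" "k < q1" "0 \<le> \<rho>" "\<rho> < q2" "q1 * q2 * (c + 1)^2 \<le> B"
  defines "P \<equiv> q2 * e * k + \<rho>"
  shows "exec B (block_init q2 k \<rho>) s 26 (sl_run (block_init q2 k \<rho>) s)"
    and "fst (sl_run (block_init q2 k \<rho>) s) 6 = e" "fst (sl_run (block_init q2 k \<rho>) s) 7 = c"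
      "fst (sl_run (block_init q2 k \<rho>) s) 8 = (d * q2) mod c"
      "fst (sl_run (block_init q2 k \<rho>) s) 9 = (d * P) mod c"
    and "\<forall>x<6. fst (sl_run (block_init q2 k \<rho>) s) x = fst s x"
      "snd (sl_run (block_init q2 k \<rho>) s) 0 = snd s 0"
    and "snd (sl_run (block_init q2 k \<rho>) s) 1
           = of_int (((d * q2) div c) * (e * (e - 1) div 2) + ((d * P) div c) * e)"
proof -
  have prog_P: "d * (q2 * k * e + \<rho>) = d * P" by (simp add: P_def mult_ac)
  have "0 < c" using assms(6,7) by simp
  then have "sl_bounded B (block_init q2 k \<rho>) s"
    using regs block_init_bounds[OF assms(4-14), folded P_def] assms(4,12)
    by (simp add: block_init_def reduce_increment_def prog_P abs_le_iff pos_imp_zdiv_nonneg_iff)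
  moreover have "sl_time (block_init q2 k \<rho>) s = 26"
    by (simp add: block_init_def reduce_increment_def)
  ultimately show "exec B (block_init q2 k \<rho>) s 26 (sl_run (block_init q2 k \<rho>) s)"
    using exec_sl_run by metis
  show "fst (sl_run (block_init q2 k \<rho>) s) 6 = e" "fst (sl_run (block_init q2 k \<rho>) s) 7 = c"
      "fst (sl_run (block_init q2 k \<rho>) s) 8 = (d * q2) mod c"
      "fst (sl_run (block_init q2 k \<rho>) s) 9 = (d * P) mod c"
      "\<forall>x<6. fst (sl_run (block_init q2 k \<rho>) s) x = fst s x"
      "snd (sl_run (block_init q2 k \<rho>) s) 0 = snd s 0"
    using regs by (simp_all add: block_init_def prog_P)
  show "snd (sl_run (block_init q2 k \<rho>) s) 1
      = of_int (((d * q2) div c) * (e * (e - 1) div 2) + ((d * P) div c) * e)"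
    using regs by (simp add: block_init_def cval_reduce_increment prog_P)
qed

lemma cval_block_value_expr:
  assumes "fst s 4 = d" "fst s 5 = e" "snd s 1 = of_int (floor_sum e c (d * q2) (d * (q2 * e * k + \<rho>)))"
    and "c = q1 * q2 * e" "0 < q1" "0 < q2"
  shows "cval s (block_value_expr q1 q2 k \<rho>) = of_real (block_value q1 q2 c d k \<rho>)"
proof -
  have "c div (q1 * q2) = e" using assms(4-6) by simp
  with assms(1-3,5,6) show ?thesis
    by (simp add: block_value_expr_def block_value_def field_simps)
qed

lemma block_prog_exec:
  assumes regs: "fst s 2 = c" "fst s 4 = d" "fst s 5 = e"
    and "0 \<le> d" "d < c" "1 \<le> e" "e \<le> c" "0 < q1" "0 < q2"
    and "0 \<le> k" "k < q1" "0 \<le> \<rho>" "\<rho> < q2" "q1 * q2 * (c + 1)^2 \<le> B"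
    and c: "c = q1 * q2 * e"
  shows "\<exists>t s'. exec B (block_prog \<chi>1 \<chi>2 q1 q2 k \<rho>) s t s' \<and>
     snd s' 0 = snd s 0 + shifted_B1_sum (\<lambda>i. cnj (\<chi>1 i)) q1 k * cnj (\<chi>2 \<rho>)
                          * of_real (block_value q1 q2 c d k \<rho>) \<and>
     (\<forall>x<6. fst s' x = fst s x) \<and> real t \<le> 74 + 60 * log 2 (of_int c)"
proof -
  define s1 P where "s1 = sl_run (block_init q2 k \<rho>) s" and "P = q2 * e * k + \<rho>"
  note init = block_init_exec[OF assms(1-14), folded s1_def P_def]
  have c_pos: "0 < c" using assms(6,7) by simp
  have "c * c + c \<le> 1 * (c + 1)^2" using c_pos by (simp add: power2_eq_square algebra_simps)
  also have "\<dots> \<le> q1 * q2 * (c + 1)^2"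
    by (intro mult_right_mono) (use assms(6-9) in \<open>simp_all add: int_one_le_iff_zero_less\<close>)
  finally have C: "c * c + c \<le> B" using assms(14) by simp
  have "0 \<le> c * c" by simp
  then have B: "1 \<le> B" "e - 1 \<le> B" "1 - e \<le> B" using C assms(6,7) by linarith+
  have e: "0 \<le> e" using assms(6) by simp
  have mods: "0 \<le> (d * q2) mod c" "(d * q2) mod c < c" "0 \<le> (d * P) mod c" "(d * P) mod c < c"
    using c_pos by simp_all
  obtain t2 s2 where loop: "exec B floor_sum_loop s1 t2 s2"
      "snd s2 1 = snd s1 1 + of_int (floor_sum e c ((d * q2) mod c) ((d * P) mod c))"
      "\<forall>x<6. fst s2 x = fst s1 x" "\<forall>x. x \<noteq> 1 \<longrightarrow> snd s2 x = snd s1 x"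
      "real t2 \<le> 2 + 30 * euclid_cost c ((d * q2) mod c)"
    using floor_sum_loop_exec[OF init(2-5) e assms(7) c_pos order.refl mods C B(1)] by blast
  have "floor_sum e c (d * q2) (d * P)
      = ((d * q2) div c) * (e * (e - 1) div 2) + ((d * P) div c) * e
        + floor_sum e c ((d * q2) mod c) ((d * P) mod c)"
    using c_pos assms(6) by (intro floor_sum_reduce) auto
  then have acc: "snd s2 1 = of_int (floor_sum e c (d * q2) (d * P))"
    using loop(2) init(8) by simp
  have regs2: "fst s2 4 = d" "fst s2 5 = e" using loop(3) init(6) regs by simp_all
  define G where "G = shifted_B1_sum (\<lambda>i. cnj (\<chi>1 i)) q1 k * cnj (\<chi>2 \<rho>)"
  define s3 where "s3 = (fst s2, (snd s2)(0 := cval s2 (CAdd (CVar 0) (CMul (CConst G) (block_value_expr q1 q2 k \<rho>)))))"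
  have "exec B (CAssign 0 (CAdd (CVar 0) (CMul (CConst G) (block_value_expr q1 q2 k \<rho>)))) s2 16 s3"
    using ExCAssign[of B s2 "CAdd (CVar 0) (CMul (CConst G) (block_value_expr q1 q2 k \<rho>))" 0] regs2 B
    by (simp add: s3_def block_value_expr_def abs_le_iff eval_nat_numeral)
  then have "exec B (block_prog \<chi>1 \<chi>2 q1 q2 k \<rho>) s (26 + (t2 + 16)) s3"
    unfolding block_prog_def G_def using ExSeq[OF init(1) ExSeq[OF loop(1)]] by blast
  moreover have "snd s3 0 = snd s 0 + G * of_real (block_value q1 q2 c d k \<rho>)"
    using cval_block_value_expr[OF regs2 acc[unfolded P_def] c assms(8,9)] loop(4) init(7)
    by (simp add: s3_def)
  moreover have "\<forall>x<6. fst s3 x = fst s x" using loop(3) init(6) by (simp add: s3_def)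
  moreover have "real (26 + (t2 + 16)) \<le> 74 + 60 * log 2 (of_int c)"
    using loop(5) euclid_cost_le[of "(d * q2) mod c" c] c_pos by simp
  ultimately show ?thesis unfolding G_def by blast
qed

fun block_progs :: "(int \<Rightarrow> complex) \<Rightarrow> (int \<Rightarrow> complex) \<Rightarrow> int \<Rightarrow> int \<Rightarrow> (int \<times> int) list \<Rightarrow> com"
  where
  "block_progs \<chi>1 \<chi>2 q1 q2 [] = Skip"
| "block_progs \<chi>1 \<chi>2 q1 q2 (p # ps) =
     Seq (block_prog \<chi>1 \<chi>2 q1 q2 (fst p) (snd p)) (block_progs \<chi>1 \<chi>2 q1 q2 ps)"

fun char_lookup :: "(int \<Rightarrow> complex) \<Rightarrow> int \<Rightarrow> int list \<Rightarrow> com" where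
  "char_lookup \<chi> q [] = Skip"
| "char_lookup \<chi> q (r # rs) =
     If (BEq (IMod (IVar 4) (IConst q)) (IConst r))
        (CAssign 0 (CMul (CVar 0) (CConst (cnj (\<chi> r)))))
        (char_lookup \<chi> q rs)"

definition dedekind_setup :: "int \<Rightarrow> int \<Rightarrow> com" where
  "dedekind_setup q1 q2 =
     Seq (IAssign 4 (IMod (IVar 3) (IVar 2)))
     (Seq (IAssign 5 (IDiv (IVar 2) (IConst (q1 * q2))))
          (CAssign 0 (CConst 0)))"

definition dedekind_prog :: "(int \<Rightarrow> complex) \<Rightarrow> (int \<Rightarrow> complex) \<Rightarrow> int \<Rightarrow> int \<Rightarrow> com" where
  "dedekind_prog \<chi>1 \<chi>2 q1 q2 =
     Seq (dedekind_setup q1 q2)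
     (Seq (block_progs \<chi>1 \<chi>2 q1 q2 (List.product [0..q1 - 1] [0..q2 - 1]))
          (char_lookup \<chi>2 q2 [0..q2 - 1]))"

lemma block_progs_exec:
  assumes "fst s 2 = c" "fst s 4 = d" "fst s 5 = e"
    and "0 \<le> d" "d < c" "1 \<le> e" "e \<le> c" "0 < q1" "0 < q2"
    and "q1 * q2 * (c + 1)^2 \<le> B" "c = q1 * q2 * e"
    and "\<forall>p\<in>set ps. 0 \<le> fst p \<and> fst p < q1 \<and> 0 \<le> snd p \<and> snd p < q2"
  shows "\<exists>t s'. exec B (block_progs \<chi>1 \<chi>2 q1 q2 ps) s t s' \<and>
     snd s' 0 = snd s 0 + (\<Sum>p\<leftarrow>ps. shifted_B1_sum (\<lambda>i. cnj (\<chi>1 i)) q1 (fst p) * cnj (\<chi>2 (snd p))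
                                     * of_real (block_value q1 q2 c d (fst p) (snd p))) \<and>
     (\<forall>x<6. fst s' x = fst s x) \<and> real t \<le> real (length ps) * (74 + 60 * log 2 (of_int c))"
  using assms(1-3,12)
proof (induction ps arbitrary: s)
  case Nil
  then show ?case by (intro exI[of _ 0] exI[of _ s]) (simp add: ExSkip)
next
  case (Cons p ps)
  have p: "0 \<le> fst p" "fst p < q1" "0 \<le> snd p" "snd p < q2"
    and ps: "\<forall>p\<in>set ps. 0 \<le> fst p \<and> fst p < q1 \<and> 0 \<le> snd p \<and> snd p < q2"
    using Cons.prems(4) by simp_all
  obtain t1 s1 where first: "exec B (block_prog \<chi>1 \<chi>2 q1 q2 (fst p) (snd p)) s t1 s1"
      "snd s1 0 = snd s 0 + shifted_B1_sum (\<lambda>i. cnj (\<chi>1 i)) q1 (fst p) * cnj (\<chi>2 (snd p))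
                             * of_real (block_value q1 q2 c d (fst p) (snd p))"
      "\<forall>x<6. fst s1 x = fst s x" "real t1 \<le> 74 + 60 * log 2 (of_int c)"
    using block_prog_exec[OF Cons.prems(1-3) assms(4-9) p assms(10,11)] by blast
  then have "fst s1 2 = c" "fst s1 4 = d" "fst s1 5 = e" using Cons.prems(1-3) by simp_all
  from Cons.IH[OF this ps] obtain t2 s2 where rest: "exec B (block_progs \<chi>1 \<chi>2 q1 q2 ps) s1 t2 s2"
      "snd s2 0 = snd s1 0 + (\<Sum>p\<leftarrow>ps. shifted_B1_sum (\<lambda>i. cnj (\<chi>1 i)) q1 (fst p) * cnj (\<chi>2 (snd p))
                                        * of_real (block_value q1 q2 c d (fst p) (snd p)))"
      "\<forall>x<6. fst s2 x = fst s1 x" "real t2 \<le> real (length ps) * (74 + 60 * log 2 (of_int c))"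
    by blast
  have "exec B (block_progs \<chi>1 \<chi>2 q1 q2 (p # ps)) s (t1 + t2) s2"
    using ExSeq[OF first(1) rest(1)] by simp
  then show ?case
    using first rest by (intro exI[of _ "t1 + t2"] exI[of _ s2]) (auto simp: algebra_simps)
qed

lemma char_lookup_exec:
  assumes "fst s 4 = d" "0 < q" "q \<le> B" "d mod q \<in> set rs" "\<forall>r\<in>set rs. 0 \<le> r \<and> r < q"
  shows "sl_bounded B (char_lookup \<chi> q rs) s
    \<and> snd (sl_run (char_lookup \<chi> q rs) s) 0 = snd s 0 * cnj (\<chi> (d mod q))
    \<and> sl_time (char_lookup \<chi> q rs) s \<le> 5 * length rs"
  using assms(4,5)
proof (induction rs)
  case (Cons r rs)
  have "0 \<le> d mod q" "d mod q < q" "0 \<le> r" "r < q" using assms(2) Cons.prems(2) by simp_all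
  then have bounds: "\<bar>q\<bar> \<le> B" "\<bar>d mod q\<bar> \<le> B" "\<bar>r\<bar> \<le> B" using assms(2,3) by arith+
  show ?case
  proof (cases "r = d mod q")
    case True
    then show ?thesis using bounds assms(1) by simp
  next
    case False
    then have "d mod q \<in> set rs" using Cons.prems(1) by simp
    then show ?thesis using Cons.IH Cons.prems(2) bounds assms(1) False by simp
  qed
qed simp

lemma sum_list_product_upto:
  "(\<Sum>p\<leftarrow>List.product [0..m - 1] [0..n - 1]. f p) = (\<Sum>k=0..<m. \<Sum>r=0..<n. f (k, r))"
  for m n :: int
proof -
  have "set (List.product [0..m - 1] [0..n - 1]) = {0..<m} \<times> {0..<n}" by auto
  moreover have "distinct (List.product [0..m - 1] [0..n - 1])" by (simp add: distinct_product)
  ultimately have "(\<Sum>p\<leftarrow>List.product [0..m - 1] [0..n - 1]. f p) = sum f ({0..<m} \<times> {0..<n})"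
    by (metis sum_list_distinct_conv_sum_set)
  then show ?thesis by (simp add: sum.cartesian_product)
qed

lemma dvd_quotient_bounds:
  fixes v c :: int
  assumes "0 < v" "v dvd c" "1 \<le> c"
  shows "c = v * (c div v)" "1 \<le> c div v" "c div v \<le> c"
proof -
  show c: "c = v * (c div v)" using assms(2) by simp
  then have "0 < v * (c div v)" using assms(3) by linarith
  then show e: "1 \<le> c div v" using assms(1) by (simp add: zero_less_mult_iff)
  have "1 * (c div v) \<le> v * (c div v)" using assms(1) e by (intro mult_right_mono) auto
  then show "c div v \<le> c" using c by simp
qed

lemma dedekind_setup_exec:
  fixes a b c d q1 q2 B :: int
  assumes "0 < q1" "0 < q2" "1 \<le> c" "q1 * q2 dvd c" "q1 * q2 * (c + 1)^2 \<le> B"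
  defines "s1 \<equiv> sl_run (dedekind_setup q1 q2) (init_state a b c d)"
  shows "exec B (dedekind_setup q1 q2) (init_state a b c d) 5 s1"
    and "fst s1 2 = c" "fst s1 4 = d mod c" "fst s1 5 = c div (q1 * q2)" "snd s1 0 = 0"
proof -
  have V: "1 \<le> q1 * q2" using assms(1,2) by (simp add: int_one_le_iff_zero_less)
  have "(c + 1) * 1 \<le> (c + 1) * (c + 1)" "1 * ((c + 1) * (c + 1)) \<le> q1 * q2 * ((c + 1) * (c + 1))"
    using assms(3) V by (intro mult_left_mono mult_right_mono; simp)+
  then have "c + 1 \<le> B" using assms(5) by (simp add: power2_eq_square)
  moreover have "q1 * q2 * 1 \<le> q1 * q2 * (c + 1)^2"
    using assms(3) V by (intro mult_left_mono) (simp_all add: one_le_power)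
  moreover have "0 \<le> d mod c" "d mod c < c" using assms(3) by simp_all
  moreover have "0 \<le> c div (q1 * q2)" "c div (q1 * q2) \<le> c"
    using dvd_quotient_bounds[of "q1 * q2" c] assms(1-4) by simp_all
  ultimately have "sl_bounded B (dedekind_setup q1 q2) (init_state a b c d)"
    using assms(5) V by (simp add: dedekind_setup_def init_state_def abs_le_iff)
  then show "exec B (dedekind_setup q1 q2) (init_state a b c d) 5 s1"
    using exec_sl_run[of B "dedekind_setup q1 q2" "init_state a b c d"]
    by (simp add: s1_def dedekind_setup_def eval_nat_numeral)
  show "fst s1 2 = c" "fst s1 4 = d mod c" "fst s1 5 = c div (q1 * q2)" "snd s1 0 = 0"
    by (simp_all add: s1_def dedekind_setup_def init_state_def)
qed

lemma dedekind_prog_exec: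
  assumes \<chi>2: "dirichlet_char q2 \<chi>2" and q: "0 < q1" "1 < q2"
    and sum0: "(\<Sum>i=1..q1. cnj (\<chi>1 i)) = 0"
    and \<gamma>: "in_Gamma0 (q1 * q2) a b c d" "1 \<le> c"
    and B: "q1 * q2 * (c + 1)^2 \<le> B"
  shows "\<exists>t s'. exec B (dedekind_prog \<chi>1 \<chi>2 q1 q2) (init_state a b c d) t s'
     \<and> snd s' 0 = dedekind_sum \<chi>1 \<chi>2 q1 a c
     \<and> real t \<le> 5 + of_int (q1 * q2) * (74 + 60 * log 2 (of_int c)) + 5 * of_int q2"
proof -
  have det: "a * d - b * c = 1" and dvd: "q1 * q2 dvd c" using \<gamma>(1) by (simp_all add: in_Gamma0_def)
  define e s1 where "e = c div (q1 * q2)" and "s1 = sl_run (dedekind_setup q1 q2) (init_state a b c d)"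
  have q2: "0 < q2" using q(2) by simp
  note init = dedekind_setup_exec[where a=a and b=b and d=d, OF q(1) q2 \<gamma>(2) dvd B,
      folded e_def s1_def]
  have e: "c = q1 * q2 * e" "1 \<le> e" "e \<le> c"
    using dvd_quotient_bounds[of "q1 * q2" c] q dvd \<gamma>(2) by (simp_all add: e_def mult.assoc)
  have d: "0 \<le> d mod c" "d mod c < c" using \<gamma>(2) by simp_all
  define ps where "ps = List.product [0..q1 - 1] [0..q2 - 1]"
  have "\<forall>p\<in>set ps. 0 \<le> fst p \<and> fst p < q1 \<and> 0 \<le> snd p \<and> snd p < q2"
    by (auto simp: ps_def)
  from block_progs_exec[OF init(2-4) d e(2,3) q(1) q2 B e(1) this, of \<chi>1 \<chi>2]
  obtain t2 s2 where blocks: "exec B (block_progs \<chi>1 \<chi>2 q1 q2 ps) s1 t2 s2"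
      "snd s2 0 = (\<Sum>p\<leftarrow>ps. shifted_B1_sum (\<lambda>i. cnj (\<chi>1 i)) q1 (fst p) * cnj (\<chi>2 (snd p))
                                 * of_real (block_value q1 q2 c (d mod c) (fst p) (snd p)))"
      "\<forall>x<6. fst s2 x = fst s1 x" "real t2 \<le> real (length ps) * (74 + 60 * log 2 (of_int c))"
    using init(5) by auto
  have "1 * 1 \<le> q1 * (c + 1)^2"
    by (intro mult_mono) (use q(1) \<gamma>(2) in \<open>simp_all add: one_le_power\<close>)
  then have "q2 * 1 \<le> q2 * (q1 * (c + 1)^2)" using q(2) by (intro mult_left_mono) simp_all
  then have "q2 \<le> B" using B by (simp add: mult_ac)
  moreover have "d mod c mod q2 \<in> set [0..q2 - 1]" using q by simp
  ultimately have lookup: "sl_bounded B (char_lookup \<chi>2 q2 [0..q2 - 1]) s2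
      \<and> snd (sl_run (char_lookup \<chi>2 q2 [0..q2 - 1]) s2) 0 = snd s2 0 * cnj (\<chi>2 (d mod c mod q2))
      \<and> sl_time (char_lookup \<chi>2 q2 [0..q2 - 1]) s2 \<le> 5 * length [0..q2 - 1]"
    using blocks(3) init(3) q by (intro char_lookup_exec) auto
  define t3 s3 where "t3 = sl_time (char_lookup \<chi>2 q2 [0..q2 - 1]) s2"
    and "s3 = sl_run (char_lookup \<chi>2 q2 [0..q2 - 1]) s2"
  have "exec B (dedekind_prog \<chi>1 \<chi>2 q1 q2) (init_state a b c d) (5 + (t2 + t3)) s3"
    unfolding dedekind_prog_def ps_def[symmetric] t3_def s3_def
    using ExSeq[OF init(1) ExSeq[OF blocks(1) exec_sl_run]] lookup by blast
  moreover have "snd s3 0 = dedekind_sum \<chi>1 \<chi>2 q1 a c"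
  proof -
    have "\<chi>2 (d mod c mod q2) = \<chi>2 (d mod c)" by (rule dirichlet_char_mod[OF \<chi>2])
    then show ?thesis
      using lookup blocks(2) dedekind_sum_eq_block_sum[OF \<chi>2 q(2,1) sum0 det dvd \<gamma>(2)]
      by (simp add: s3_def ps_def sum_list_product_upto mult.commute)
  qed
  moreover have "real (5 + (t2 + t3)) \<le> 5 + of_int (q1 * q2) * (74 + 60 * log 2 (of_int c)) + 5 * of_int q2"
  proof -
    have "real (length ps) = of_int (q1 * q2)" using q by (simp add: ps_def nat_mult_distrib)
    moreover have "t3 \<le> 5 * nat q2" using lookup by (simp add: t3_def)
    then have "real t3 \<le> 5 * of_int q2" using q by linarith
    ultimately show ?thesis using blocks(4) by simp
  qed
  ultimately show ?thesis by blast
qed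

section \<open>Cyclotomic constants\<close>

lemma in_cyclotomic_0: "in_cyclotomic M 0"
  unfolding in_cyclotomic_def by (rule exI[of _ "\<lambda>_. 0"]) simp

lemma in_cyclotomic_add:
  assumes "in_cyclotomic M x" "in_cyclotomic M y"
  shows "in_cyclotomic M (x + y)"
proof -
  obtain r s where "x = (\<Sum>k<M. of_rat (r k) * cis (2 * pi * real k / real M))"
    and "y = (\<Sum>k<M. of_rat (s k) * cis (2 * pi * real k / real M))"
    using assms unfolding in_cyclotomic_def by blast
  then have "x + y = (\<Sum>k<M. of_rat (r k + s k) * cis (2 * pi * real k / real M))"
    by (simp add: of_rat_add distrib_right sum.distrib)
  then show ?thesis unfolding in_cyclotomic_def by - (rule exI[of _ "\<lambda>k. r k + s k"], simp)
qed

lemma in_cyclotomic_sum: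
  "(\<And>x. x \<in> A \<Longrightarrow> in_cyclotomic M (f x)) \<Longrightarrow> in_cyclotomic M (\<Sum>x\<in>A. f x)"
  by (induction A rule: infinite_finite_induct) (simp_all add: in_cyclotomic_0 in_cyclotomic_add)

definition root_of_unity_or_0 :: "nat \<Rightarrow> complex \<Rightarrow> bool" where
  "root_of_unity_or_0 M w \<longleftrightarrow> w = 0 \<or> w ^ M = 1"

lemma root_of_unity_or_0_mult:
  "root_of_unity_or_0 M x \<Longrightarrow> root_of_unity_or_0 M y \<Longrightarrow> root_of_unity_or_0 M (x * y)"
  unfolding root_of_unity_or_0_def by (auto simp: power_mult_distrib)

lemma root_of_unity_or_0_cnj: "root_of_unity_or_0 M x \<Longrightarrow> root_of_unity_or_0 M (cnj x)"
  unfolding root_of_unity_or_0_def by (metis complex_cnj_one complex_cnj_power complex_cnj_zero)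

lemma root_of_unity_or_0_mult_exponent: "root_of_unity_or_0 M x \<Longrightarrow> root_of_unity_or_0 (M * N) x"
  unfolding root_of_unity_or_0_def by (auto simp: power_mult)

lemma in_cyclotomic_rat_mult:
  assumes "M > 0" "z \<in> \<rat>" "root_of_unity_or_0 M w"
  shows "in_cyclotomic M (z * w)"
proof (cases "w = 0")
  case True
  then show ?thesis by (simp add: in_cyclotomic_0)
next
  case False
  then have "w \<in> (\<lambda>k. cis (2 * pi * real k / real M)) ` {..<M}"
    using assms(3) bij_betw_roots_unity[OF assms(1)]
    by (simp add: root_of_unity_or_0_def bij_betw_def)
  then obtain j where j: "j < M" "w = cis (2 * pi * real j / real M)" by auto
  obtain r where r: "z = of_rat r" using assms(2) by (cases z) simp
  have "(\<Sum>k<M. of_rat (if k = j then r else 0) * cis (2 * pi * real k / real M)) = z * w"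
    using j r by (simp add: if_distrib if_distribR sum.delta cong: if_cong)
  then show ?thesis
    unfolding in_cyclotomic_def by - (rule exI[of _ "\<lambda>k. if k = j then r else 0"], simp)
qed

lemma dirichlet_char_root_of_unity_or_0:
  assumes \<chi>: "dirichlet_char q \<chi>"
  shows "root_of_unity_or_0 (totient (nat q)) (\<chi> x)"
proof (cases "coprime x q")
  case False
  then show ?thesis using \<chi> by (simp add: dirichlet_char_def root_of_unity_or_0_def)
next
  case True
  have q: "q \<ge> 1" using \<chi> by (simp add: dirichlet_char_def)
  define m where "m = nat (x mod q)"
  have m: "int m = x mod q" using q by (simp add: m_def)
  then have "coprime m (nat q)" using True q by (simp flip: coprime_int_iff)
  then have "[m ^ totient (nat q) = 1] (mod nat q)" by (rule euler_theorem)
  then have "[int (m ^ totient (nat q)) = int 1] (mod int (nat q))" by (simp only: cong_int_iff)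
  then have "(int m ^ totient (nat q)) mod q = 1 mod q" using q by (simp add: cong_def)
  then have "\<chi> (int m ^ totient (nat q)) = \<chi> 1" by (rule dirichlet_char_cong[OF \<chi>])
  moreover have "\<chi> (int m ^ n) = \<chi> (int m) ^ n" for n
    using \<chi> by (induction n) (simp_all add: dirichlet_char_def)
  moreover have "\<chi> (int m) = \<chi> x" using m dirichlet_char_mod[OF \<chi>] by simp
  ultimately show ?thesis using \<chi> by (simp add: dirichlet_char_def root_of_unity_or_0_def)
qed

lemma in_cyclotomic_shifted_B1_sum:
  assumes "M > 0" "\<And>i. root_of_unity_or_0 M (w i)" "root_of_unity_or_0 M z"
  shows "in_cyclotomic M (shifted_B1_sum w q k * z)"
proof -
  have "shifted_B1_sum w q k * z = (\<Sum>i=1..q.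
      of_real (of_int i / of_int q - 1/2 - (if q - k \<le> i then 1 else 0)) * (w i * z))"
    by (simp add: shifted_B1_sum_def sum_distrib_left mult_ac)
  also have "in_cyclotomic M \<dots>"
    using assms by (intro in_cyclotomic_sum in_cyclotomic_rat_mult root_of_unity_or_0_mult) simp_all
  finally show ?thesis .
qed

lemma cconsts_block_progs:
  "z \<in> cconsts (block_progs \<chi>1 \<chi>2 q1 q2 ps)
     \<Longrightarrow> \<exists>p\<in>set ps. z \<in> cconsts (block_prog \<chi>1 \<chi>2 q1 q2 (fst p) (snd p))"
  by (induction ps) auto

lemma cconsts_block_prog:
  "cconsts (block_prog \<chi>1 \<chi>2 q1 q2 k \<rho>)
     \<subseteq> {1/2, of_int k / of_int q1, of_int \<rho> / of_int (q1 * q2), 1 / (2 * of_int q1),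
        shifted_B1_sum (\<lambda>i. cnj (\<chi>1 i)) q1 k * cnj (\<chi>2 \<rho>)}"
  by (auto simp: block_prog_def block_init_def block_value_expr_def reduce_increment_def
      floor_sum_loop_def floor_sum_step_def)

lemma cconsts_char_lookup: "cconsts (char_lookup \<chi> q rs) = (\<lambda>r. cnj (\<chi> r)) ` set rs"
  by (induction rs) auto

lemma dedekind_prog_cyclotomic:
  assumes \<chi>1: "dirichlet_char q1 \<chi>1" and \<chi>2: "dirichlet_char q2 \<chi>2"
  defines "M \<equiv> totient (nat q1) * totient (nat q2)"
  shows "\<forall>z\<in>cconsts (dedekind_prog \<chi>1 \<chi>2 q1 q2). in_cyclotomic M z"
proof
  fix z assume z: "z \<in> cconsts (dedekind_prog \<chi>1 \<chi>2 q1 q2)"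
  have "1 \<le> q1" "1 \<le> q2" using \<chi>1 \<chi>2 by (simp_all add: dirichlet_char_def)
  then have M: "M > 0" by (simp add: M_def)
  have "M = totient (nat q1) * totient (nat q2)" "M = totient (nat q2) * totient (nat q1)"
    by (simp_all add: M_def)
  then have root: "root_of_unity_or_0 M (cnj (\<chi>1 x))" "root_of_unity_or_0 M (cnj (\<chi>2 x))" for x
    by (metis root_of_unity_or_0_cnj root_of_unity_or_0_mult_exponent
        dirichlet_char_root_of_unity_or_0 \<chi>1 \<chi>2)+
  have rat: "in_cyclotomic M r" if "r \<in> \<rat>" for r
    using in_cyclotomic_rat_mult[OF M that, of 1] by (simp add: root_of_unity_or_0_def)
  consider "z = 0" | p where "z \<in> cconsts (block_prog \<chi>1 \<chi>2 q1 q2 (fst p) (snd p))"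
    | r where "z = cnj (\<chi>2 r)"
    using z by (auto simp: dedekind_prog_def dedekind_setup_def cconsts_char_lookup
        dest: cconsts_block_progs)
  then show "in_cyclotomic M z"
  proof cases
    case 1
    then show ?thesis by (simp add: in_cyclotomic_0)
  next
    case 2
    then have "z \<in> \<rat> \<or> z = shifted_B1_sum (\<lambda>i. cnj (\<chi>1 i)) q1 (fst p) * cnj (\<chi>2 (snd p))"
      using cconsts_block_prog[of \<chi>1 \<chi>2 q1 q2 "fst p" "snd p"] by auto
    moreover have "in_cyclotomic M (shifted_B1_sum (\<lambda>i. cnj (\<chi>1 i)) q1 (fst p) * cnj (\<chi>2 (snd p)))"
      using M root by (intro in_cyclotomic_shifted_B1_sum)
    ultimately show ?thesis using rat by auto
  next
    case 3
    then show ?thesis using in_cyclotomic_rat_mult[OF M _ root(2)] by fastforce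
  qed
qed

lemma mult_square_le_mult_power:
  fixes v k x y :: int
  assumes "0 \<le> y" "y \<le> x" "0 \<le> v" "v \<le> k" "2 \<le> n"
  shows "v * y^2 \<le> k * x^n"
proof -
  have "y^2 \<le> x^2" using assms(2,1) by (rule power_mono)
  also have "\<dots> \<le> x^n" using assms(1,2,5) by (cases "x = 0") (auto intro: power_increasing)
  finally show ?thesis using assms(3,4) by (intro mult_mono) auto
qed

lemma log2_le_twice_ln: "1 \<le> x \<Longrightarrow> log 2 x \<le> 2 * ln x" for x :: real
proof -
  assume "1 \<le> x"
  have "ln (1/2 :: real) \<le> 1/2 - 1" by (rule ln_le_minus_one) simp
  then have "1/2 \<le> ln (2 :: real)" by (simp add: ln_div)
  moreover have "0 \<le> ln x" using \<open>1 \<le> x\<close> by simp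
  ultimately have "ln x * 1 \<le> ln x * (2 * ln 2)" by (intro mult_left_mono) auto
  then show ?thesis by (simp add: log_def divide_le_eq mult_ac)
qed

lemma dedekind_prog_time_le:
  fixes v w c :: int
  assumes "1 \<le> c" "1 \<le> w" "w \<le> v"
  shows "5 + of_int v * (74 + 60 * log 2 (of_int c)) + 5 * of_int w
    \<le> 200 * of_int v * (1 + ln (of_int c))"
proof -
  have v: "1 \<le> real_of_int v" using assms(2,3) by simp
  have "log 2 (of_int c) \<le> 2 * ln (of_int c)" using assms(1) by (intro log2_le_twice_ln) simp
  then have "of_int v * log 2 (of_int c) \<le> of_int v * (2 * ln (of_int c))"
    using v by (intro mult_left_mono) auto
  moreover have "0 \<le> of_int v * ln (real_of_int c)" using v assms(1) by simp
  ultimately show ?thesis using v assms(3) by (simp only: algebra_simps)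
qed

theorem theorem1p4:
  fixes q1 q2 :: int and \<chi>1 \<chi>2 :: "int \<Rightarrow> complex"
  assumes "primitive_char q1 \<chi>1" and "primitive_char q2 \<chi>2"
    and "q1 > 1" and "q2 > 1"
    and "\<chi>1 (-1) * \<chi>2 (-1) = 1"
  shows "\<exists>(P :: com) (M :: nat) (K :: nat).
           M > 0 \<and> (\<forall>z \<in> cconsts P. in_cyclotomic M z) \<and>
           (\<forall>a b c d. in_Gamma0 (q1 * q2) a b c d \<and> c \<ge> 1 \<longrightarrow>
              (\<exists>t s'. exec (int K * (\<bar>a\<bar> + \<bar>b\<bar> + \<bar>c\<bar> + \<bar>d\<bar> + 1) ^ K)
                         P (init_state a b c d) t s' \<and>
                       snd s' 0 = dedekind_sum \<chi>1 \<chi>2 q1 a c \<and>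
                       real t \<le> real K * (1 + ln (real_of_int c))))"
proof -
  have \<chi>1: "dirichlet_char q1 \<chi>1" and \<chi>2: "dirichlet_char q2 \<chi>2"
    using assms(1,2) by (simp_all add: primitive_char_def)
  have sum0: "(\<Sum>i=1..q1. cnj (\<chi>1 i)) = 0"
    using arg_cong[OF primitive_char_sum_eq_0[OF assms(1,3)], of cnj] by simp
  have V: "4 \<le> q1 * q2" using assms(3,4) mult_mono[of 2 q1 2 q2] by simp
  define K where "K = nat (200 * (q1 * q2))"
  have "\<exists>t s'. exec (int K * (\<bar>a\<bar> + \<bar>b\<bar> + \<bar>c\<bar> + \<bar>d\<bar> + 1) ^ K)
                  (dedekind_prog \<chi>1 \<chi>2 q1 q2) (init_state a b c d) t s'
             \<and> snd s' 0 = dedekind_sum \<chi>1 \<chi>2 q1 a c \<and> real t \<le> real K * (1 + ln (of_int c))"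
    if \<gamma>: "in_Gamma0 (q1 * q2) a b c d" "1 \<le> c" for a b c d
  proof -
    have "q1 * q2 * (c + 1)^2 \<le> int K * (\<bar>a\<bar> + \<bar>b\<bar> + \<bar>c\<bar> + \<bar>d\<bar> + 1) ^ K"
      using V \<gamma>(2) by (intro mult_square_le_mult_power) (auto simp: K_def)
    from dedekind_prog_exec[OF \<chi>2 _ assms(4) sum0 \<gamma> this] assms(3) obtain t s' where
      "exec (int K * (\<bar>a\<bar> + \<bar>b\<bar> + \<bar>c\<bar> + \<bar>d\<bar> + 1) ^ K) (dedekind_prog \<chi>1 \<chi>2 q1 q2) (init_state a b c d) t s'"
      "snd s' 0 = dedekind_sum \<chi>1 \<chi>2 q1 a c"
      "real t \<le> 5 + of_int (q1 * q2) * (74 + 60 * log 2 (of_int c)) + 5 * of_int q2"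
      by auto
    moreover have "5 + of_int (q1 * q2) * (74 + 60 * log 2 (of_int c)) + 5 * of_int q2
        \<le> real K * (1 + ln (of_int c))"
      using dedekind_prog_time_le[OF \<gamma>(2), of q2 "q1 * q2"] assms(3,4) by (simp add: K_def)
    ultimately show ?thesis by (blast intro: order_trans)
  qed
  moreover have "0 < totient (nat q1) * totient (nat q2)" using assms(3,4) by simp
  ultimately show ?thesis using dedekind_prog_cyclotomic[OF \<chi>1 \<chi>2] by blast
qed

end
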